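(* Let $G\in\mathfrak{M}$, $\phi=\phi_G$, $\operatorname{Arg}=\operatorname{Arg}_G$ and $E=E^G$. Then $$\operatorname{dom}\nabla\phi\setminus\operatorname{udom}\operatorname{Arg}\subset\partial\operatorname{dom}\phi\cap G=\partial\operatorname{dom}\phi\cap E.$$ Conversely, the set $\operatorname{udom}\operatorname{Arg}\setminus\operatorname{dom}\nabla\phi$ has at most two points, and these points belong to different linear (horizontal or vertical) parts of $\partial\operatorname{dom}\phi$. If $y\in\operatorname{dom}\nabla\phi\cap\operatorname{udom}\operatorname{Arg}$, then $D^c\phi(y)$ is the only element of $\operatorname{Arg}(y)$ and $$\phi(y)=c(D^c\phi(y),y)=\frac{\partial\phi}{\partial y_1}(y)\,\frac{\partial\phi}{\partial y_2}(y).$$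
   Context: $c(x,y)=(x_1-y_1)(x_2-y_2)$ for $x,y\in\mathbb{R}^2$. A set $G\subset\mathbb{R}^2$ is monotone if $c(r,s)\ge0$ for $r,s\in G$, maximal monotone if not a proper subset of a monotone set; $\mathfrak{M}$ is the family of maximal monotone sets. $\phi_G(y)=\inf_{x\in G}c(x,y)\in[-\infty,0]$. $\operatorname{dom}\phi=\{\phi>-\infty\}$ (a convex set); $\partial A$ denotes the relative boundary (closure minus relative interior) of a convex set $A$; $\partial\operatorname{dom}\phi$ is contained in the union of at most two lines, each horizontal or vertical, and its "linear parts" are its horizontal and vertical pieces. For $y$ in the interior of $\operatorname{dom}\phi$, $\nabla\phi(y)$ is the classical gradient when it exists; for $y\in\partial\operatorname{dom}\phi$, $\nabla\phi(y)$ exists if $\nabla\phi(y^n)$ converges to a common limit for every sequence $y^n\to y$ of interior points of $\operatorname{dom}\phi$ at which $\phi$ is differentiable. $\operatorname{dom}\nabla\phi=\{y\in\operatorname{dom}\phi:\nabla\phi(y)\text{ exists}\}$, and $D^c\phi(y)=\big(y_1-\frac{\partial\phi}{\partial y_2}(y),\,y_2-\frac{\partial\phi}{\partial y_1}(y)\big)$ for $y\in\operatorname{dom}\nabla\phi$. $\operatorname{Arg}_G(y)=\{x\in G:\phi_G(y)=c(x,y)\}$ and $\operatorname{udom}\operatorname{Arg}_G=\{y\in\mathbb{R}^2:\operatorname{Arg}_G(y)\text{ is a singleton}\}$. For $i=1,2$, $t\in\mathbb{R}$: $E^G_i(t)=\{x\in G:x_i=t\}$, $\mathcal{T}^G_i=\{t:E^G_i(t)\text{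 has more than one point}\}$, $E^G=\bigcup_{i=1,2}\bigcup_{t\in\mathcal{T}^G_i}E^G_i(t)$. *)

theory Defs
  imports "HOL-Analysis.Analysis"
begin

type_synonym pt = "real \<times> real"

definition cst :: "pt \<Rightarrow> pt \<Rightarrow> real" where
  "cst x y = (fst x - fst y) * (snd x - snd y)"

definition monotone_set :: "pt set \<Rightarrow> bool" where
  "monotone_set G \<longleftrightarrow> (\<forall>r\<in>G. \<forall>s\<in>G. cst r s \<ge> 0)"

definition maximal_monotone :: "pt set \<Rightarrow> bool" where
  "maximal_monotone G \<longleftrightarrow> monotone_set G \<and> (\<forall>H. monotone_set H \<and> G \<subseteq> H \<longrightarrow> H = G)"

definition phi :: "pt set \<Rightarrow> pt \<Rightarrow> ereal" where
  "phi G y = (INF x\<in>G. ereal (cst x y))"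

definition dom_phi :: "pt set \<Rightarrow> pt set" where
  "dom_phi G = {y. phi G y > -\<infinity>}"

text \<open>real-valued version of phi (meaningful on dom phi)\<close>
definition phir :: "pt set \<Rightarrow> pt \<Rightarrow> real" where
  "phir G y = real_of_ereal (phi G y)"

definition diff_pts :: "pt set \<Rightarrow> pt set" where
  "diff_pts G = {y \<in> interior (dom_phi G). \<exists>D. GDERIV (phir G) y :> D}"

definition cgrad :: "pt set \<Rightarrow> pt \<Rightarrow> pt" where
  "cgrad G y = (SOME D. GDERIV (phir G) y :> D)"

definition has_grad :: "pt set \<Rightarrow> pt \<Rightarrow> pt \<Rightarrow> bool" where
  "has_grad G y D \<longleftrightarrow>
     (y \<in> interior (dom_phi G) \<and> GDERIV (phir G) y :> D) \<or>
     (y \<in> rel_frontier (dom_phi G) \<and> y \<in> dom_phi G \<and>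
       (\<forall>ys::nat \<Rightarrow> pt. (\<forall>n. ys n \<in> diff_pts G) \<and> ys \<longlonglongrightarrow> y
            \<longrightarrow> (\<lambda>n. cgrad G (ys n)) \<longlonglongrightarrow> D))"

definition dom_grad :: "pt set \<Rightarrow> pt set" where
  "dom_grad G = {y \<in> dom_phi G. \<exists>D. has_grad G y D}"

definition grad :: "pt set \<Rightarrow> pt \<Rightarrow> pt" where
  "grad G y = (SOME D. has_grad G y D)"

definition Dc :: "pt set \<Rightarrow> pt \<Rightarrow> pt" where
  "Dc G y = (fst y - snd (grad G y), snd y - fst (grad G y))"

definition Arg :: "pt set \<Rightarrow> pt \<Rightarrow> pt set" where
  "Arg G y = {x \<in> G. phi G y = ereal (cst x y)}"

definition udom_Arg :: "pt set \<Rightarrow> pt set" where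
  "udom_Arg G = {y. \<exists>x. Arg G y = {x}}"

definition coord :: "nat \<Rightarrow> pt \<Rightarrow> real" where
  "coord i x = (if i = 1 then fst x else snd x)"

definition E_i :: "pt set \<Rightarrow> nat \<Rightarrow> real \<Rightarrow> pt set" where
  "E_i G i t = {x \<in> G. coord i x = t}"

definition T_i :: "pt set \<Rightarrow> nat \<Rightarrow> real set" where
  "T_i G i = {t. \<exists>a\<in>E_i G i t. \<exists>b\<in>E_i G i t. a \<noteq> b}"

definition E_set :: "pt set \<Rightarrow> pt set" where
  "E_set G = (\<Union>i\<in>{1,2}. \<Union>t\<in>T_i G i. E_i G i t)"

definition linear_parts :: "pt set \<Rightarrow> pt set set" where
  "linear_parts G = {P. \<exists>t. (P = {p. snd p = t} \<inter> rel_frontier (dom_phi G) \<or>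
                            P = {p. fst p = t} \<inter> rel_frontier (dom_phi G)) \<and> infinite P}"

end

theory Submission
  imports Defs
begin

text \<open>
  At an interior point \<open>y\<close> of \<open>dom_phi G\<close>, the set \<open>G\<close> has points strictly south-west and
  strictly north-east of \<open>y\<close>. This bounds minimizers uniformly near \<open>y\<close>, so \<open>Arg\<close> is nonempty
  and upper semicontinuous there. As \<open>phi\<close> is the infimum of the functions \<open>c(x, \<cdot>)\<close> with
  gradient \<open>(y\<^sub>2 - x\<^sub>2, y\<^sub>1 - x\<^sub>1)\<close>, it is differentiable at an interior point exactly when the
  minimizer is unique, and the gradient then recovers the minimizer as \<open>D\<^sup>c\<phi>(y)\<close>. Along a
  diagonal, minimizers are monotone in \<open>x\<^sub>1 + x\<^sub>2\<close>, so uniqueness fails only countably often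
  and differentiability points are dense.

  At a boundary point where the gradient exists as a limit, the limit of the minimizers of nearby
  differentiability points is a minimizer. Any other minimizer would beat it at some interior
  point unless \<open>c = 0\<close> at \<open>y\<close>, and then maximality puts \<open>y\<close> into \<open>G\<close>. Conversely, at a
  boundary point with a unique minimizer but no gradient, minimizers of nearby interior points
  must escape to infinity along \<open>G\<close>, downwards or upwards. Escaping downwards forces \<open>G\<close> to be
  bounded below in one coordinate and \<open>y\<close> to lie on the extremal line, which is then a linear part
  of the boundary; this happens for at most one point. The upward case follows by the symmetry
  \<open>x \<mapsto> -x\<close>, and no line is extremal in both directions.
\<close>

section \<open>The cost function and its symmetries\<close>

lemma cst_commute: "cst x y = cst y x"
  unfolding cst_def by (simp add: algebra_simps)

lemma cst_self [simp]: "cst x x = 0"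
  unfolding cst_def by simp

lemma abs_fst_diff_le_dist: "\<bar>fst x - fst y\<bar> \<le> dist x y"
  using dist_fst_le[of x y] by (simp add: dist_real_def)

lemma abs_snd_diff_le_dist: "\<bar>snd x - snd y\<bar> \<le> dist x y"
  using dist_snd_le[of x y] by (simp add: dist_real_def)

lemma norm_le_abs_fst_abs_snd: "norm (x::pt) \<le> \<bar>fst x\<bar> + \<bar>snd x\<bar>"
  using norm_Pair_le[of "fst x" "snd x"] by simp

lemma abs_fst_le_norm: "\<bar>fst (x::pt)\<bar> \<le> norm x"
  using norm_fst_le[of "fst x" "snd x"] by simp

lemma abs_snd_le_norm: "\<bar>snd (x::pt)\<bar> \<le> norm x"
  using norm_snd_le[of "snd x" "fst x"] by simp

lemma le_product_div:
  fixes h p q :: real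
  assumes "0 < h" "h \<le> p" "h \<le> q"
  shows "p \<le> p * q / h" "q \<le> p * q / h"
  using assms by (simp_all add: pos_le_divide_eq mult_left_mono mult_right_mono)

definition cst_symmetry :: "(pt \<Rightarrow> pt) \<Rightarrow> bool" where
  "cst_symmetry T \<longleftrightarrow> linear T \<and> (\<forall>x. T (T x) = x) \<and> (\<forall>x y. cst (T x) (T y) = cst x y)
     \<and> (\<forall>x y. dist (T x) (T y) = dist x y)"

lemma cst_symmetry_swap: "cst_symmetry prod.swap"
  unfolding cst_symmetry_def
proof (intro conjI allI)
  show "linear (prod.swap :: pt \<Rightarrow> pt)" by (rule linearI) auto
  fix x y :: pt
  show "cst (prod.swap x) (prod.swap y) = cst x y" by (simp add: cst_def)
  show "dist (prod.swap x) (prod.swap y) = dist x y"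
    by (cases x; cases y) (simp add: dist_Pair_Pair add.commute)
qed simp

lemma cst_symmetry_uminus: "cst_symmetry uminus"
  unfolding cst_symmetry_def
  by (simp add: linear_uminus cst_def algebra_simps dist_norm norm_minus_commute)

context
  fixes T assumes T: "cst_symmetry T"
begin

lemma cst_symmetry_involution [simp]: "T (T x) = x"
  using T unfolding cst_symmetry_def by blast

lemma cst_symmetry_cst [simp]: "cst (T x) (T y) = cst x y"
  using T unfolding cst_symmetry_def by blast

lemma cst_symmetry_dist [simp]: "dist (T x) (T y) = dist x y"
  using T unfolding cst_symmetry_def by blast

lemma cst_symmetry_inj: "inj T"
  by (metis injI cst_symmetry_involution)

lemma cst_symmetry_image_image [simp]: "T ` T ` S = S"
  by (force simp: image_iff)

lemma cst_symmetry_mem_image_iff: "y \<in> T ` S \<longleftrightarrow> T y \<in> S"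
  by (metis cst_symmetry_involution image_iff)

lemma cst_symmetry_mem_image [simp]: "T y \<in> T ` S \<longleftrightarrow> y \<in> S"
  by (simp add: cst_symmetry_mem_image_iff)

lemma monotone_set_image: "monotone_set H \<Longrightarrow> monotone_set (T ` H)"
  unfolding monotone_set_def by auto

lemma maximal_monotone_image: "maximal_monotone G \<Longrightarrow> maximal_monotone (T ` G)"
  unfolding maximal_monotone_def
  by (metis monotone_set_image cst_symmetry_image_image image_mono)

lemma cst_image_left: "cst (T x) y = cst x (T y)"
  by (metis cst_symmetry_cst cst_symmetry_involution)

lemma phi_image: "phi (T ` G) y = phi G (T y)"
  unfolding phi_def image_image cst_image_left ..

lemma dom_phi_image: "dom_phi (T ` G) = T ` dom_phi G"
  unfolding dom_phi_def by (auto simp: cst_symmetry_mem_image_iff phi_image)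

lemma Arg_image: "Arg (T ` G) (T y) = T ` Arg G y"
  unfolding Arg_def by (rule set_eqI) (simp add: cst_symmetry_mem_image_iff phi_image cst_image_left)

lemma interior_image: "interior (T ` S) = T ` interior S"
  using interior_injective_linear_image T cst_symmetry_inj unfolding cst_symmetry_def by blast

lemma rel_frontier_image: "rel_frontier (T ` S) = T ` rel_frontier S"
proof -
  have lin: "linear T" using T unfolding cst_symmetry_def by blast
  have "bounded_linear T" using lin by (simp add: linear_conv_bounded_linear)
  then show ?thesis
    unfolding rel_frontier_def
    using closure_injective_linear_image[OF lin cst_symmetry_inj]
      rel_interior_injective_linear_image[OF _ cst_symmetry_inj] image_set_diff[OF cst_symmetry_inj]
    by simp
qed

lemma Arg_image_eq_singleton: "Arg (T ` G) (T y) = {T x} \<longleftrightarrow> Arg G y = {x}"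
  unfolding Arg_image by (metis cst_symmetry_image_image image_empty image_insert)

end

section \<open>Maximal monotone sets and the interior of the domain\<close>

lemma not_bdd_below_ex: "\<not> bdd_below S \<Longrightarrow> \<exists>x\<in>S. x < (m::real)"
  unfolding bdd_below_def by (meson not_le)

lemma not_bdd_above_ex: "\<not> bdd_above S \<Longrightarrow> \<exists>x\<in>S. (m::real) < x"
  unfolding bdd_above_def by (meson not_le)

definition surrounds :: "pt set \<Rightarrow> pt \<Rightarrow> bool" where
  "surrounds G y \<longleftrightarrow>
     (\<exists>a\<in>G. \<exists>b\<in>G. fst a < fst y \<and> snd a < snd y \<and> fst y < fst b \<and> snd y < snd b)"

lemma surrounds_midpoint:
  "a \<in> G \<Longrightarrow> b \<in> G \<Longrightarrow> fst a < fst b \<Longrightarrow> snd a < snd b \<Longrightarrow> surrounds G ((a + b) /\<^sub>R 2)"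
  unfolding surrounds_def by (intro bexI[of _ a] bexI[of _ b]) auto

locale max_monotone =
  fixes G :: "pt set"
  assumes maximal_monotone: "maximal_monotone G"
begin

lemma image_max_monotone: "cst_symmetry T \<Longrightarrow> max_monotone (T ` G)"
  using maximal_monotone_image maximal_monotone by (simp add: max_monotone_def)

lemma cst_nonneg: "r \<in> G \<Longrightarrow> s \<in> G \<Longrightarrow> 0 \<le> cst r s"
  using maximal_monotone unfolding maximal_monotone_def monotone_set_def by auto

lemma comparable:
  "r \<in> G \<Longrightarrow> s \<in> G \<Longrightarrow> (fst r \<le> fst s \<and> snd r \<le> snd s) \<or> (fst s \<le> fst r \<and> snd s \<le> snd r)"
  using cst_nonneg[of r s] unfolding cst_def zero_le_mult_iff by auto

lemma eq_if_sum_eq: "a \<in> G \<Longrightarrow> b \<in> G \<Longrightarrow> fst a + snd a = fst b + snd b \<Longrightarrow> a = b"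
  using comparable[of a b] by (auto simp: prod_eq_iff)

lemma common_lower_point:
  "x \<in> G \<Longrightarrow> x' \<in> G \<Longrightarrow> \<exists>z\<in>G. fst z \<le> fst x \<and> snd z \<le> snd x \<and> fst z \<le> fst x' \<and> snd z \<le> snd x'"
  using comparable by blast

lemma common_upper_point:
  "x \<in> G \<Longrightarrow> x' \<in> G \<Longrightarrow> \<exists>z\<in>G. fst x \<le> fst z \<and> snd x \<le> snd z \<and> fst x' \<le> fst z \<and> snd x' \<le> snd z"
  using comparable by blast

lemma mem_if_cst_nonneg: assumes "\<And>x. x \<in> G \<Longrightarrow> 0 \<le> cst x p" shows "p \<in> G"
proof -
  have "monotone_set (insert p G)"
    unfolding monotone_set_def using assms cst_nonneg cst_commute by (metis cst_self insert_iff order_refl)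
  then show ?thesis using maximal_monotone unfolding maximal_monotone_def by blast
qed

lemma closed: "closed G"
proof -
  have "closure G \<subseteq> {p. 0 \<le> cst x p}" if "x \<in> G" for x
    using cst_nonneg[OF that] unfolding cst_def
    by (intro closure_minimal) (auto intro!: closed_Collect_le continuous_intros)
  then have "p \<in> G" if "p \<in> closure G" for p
    using that by (intro mem_if_cst_nonneg) blast
  then show ?thesis using closure_subset_eq by blast
qed

lemma nonempty: "G \<noteq> {}"
  using mem_if_cst_nonneg[of 0] by auto

lemma not_bdd_below_fst_snd: "\<not> (bdd_below (fst ` G) \<and> bdd_below (snd ` G))"
proof
  assume "bdd_below (fst ` G) \<and> bdd_below (snd ` G)"
  then obtain a b where a: "\<forall>x\<in>G. a \<le> fst x" and b: "\<forall>x\<in>G. b \<le> snd x"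
    unfolding bdd_below_def by auto
  have "0 \<le> cst x (a - 1, b - 1)" if "x \<in> G" for x
    using a b that unfolding cst_def by (auto intro!: mult_nonneg_nonneg)
  then have "(a - 1, b - 1) \<in> G" by (rule mem_if_cst_nonneg)
  then show False using a by force
qed

lemma not_bdd_above_fst_snd: "\<not> (bdd_above (fst ` G) \<and> bdd_above (snd ` G))"
proof -
  interpret N: max_monotone "uminus ` G" by (rule image_max_monotone[OF cst_symmetry_uminus])
  have "fst ` uminus ` G = uminus ` fst ` G" "snd ` uminus ` G = uminus ` snd ` G"
    by (auto simp: image_image)
  then show ?thesis using N.not_bdd_below_fst_snd by simp
qed

lemma phi_le: "x \<in> G \<Longrightarrow> phi G y \<le> ereal (cst x y)"
  unfolding phi_def by (rule INF_lower)

lemma phi_eq_phir: assumes "y \<in> dom_phi G" shows "phi G y = ereal (phir G y)"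
proof -
  obtain x where "x \<in> G" using nonempty by auto
  then have "phi G y \<le> ereal (cst x y)" by (rule phi_le)
  then show ?thesis using assms unfolding phir_def dom_phi_def by (cases "phi G y") auto
qed

lemma phir_le: "y \<in> dom_phi G \<Longrightarrow> x \<in> G \<Longrightarrow> phir G y \<le> cst x y"
  using phi_le[of x y] phi_eq_phir[of y] by simp

lemma dom_phiI:
  assumes "\<And>x. x \<in> G \<Longrightarrow> L \<le> cst x y" shows "y \<in> dom_phi G" "L \<le> phir G y"
proof -
  have "ereal L \<le> phi G y" unfolding phi_def using assms by (auto intro!: INF_greatest)
  then show "y \<in> dom_phi G" unfolding dom_phi_def by (cases "phi G y") auto
  then show "L \<le> phir G y" using \<open>ereal L \<le> phi G y\<close> phi_eq_phir[of y] by simp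
qed

lemma Arg_iff: "x \<in> Arg G y \<longleftrightarrow> x \<in> G \<and> y \<in> dom_phi G \<and> phir G y = cst x y"
proof
  assume x: "x \<in> Arg G y"
  then have "y \<in> dom_phi G" unfolding Arg_def dom_phi_def by auto
  then show "x \<in> G \<and> y \<in> dom_phi G \<and> phir G y = cst x y"
    using x phi_eq_phir[of y] unfolding Arg_def by simp
qed (simp add: Arg_def phi_eq_phir)

lemma ArgI: assumes "x \<in> G" "\<And>x'. x' \<in> G \<Longrightarrow> cst x y \<le> cst x' y" shows "x \<in> Arg G y"
proof -
  have "y \<in> dom_phi G" "cst x y \<le> phir G y" using dom_phiI[OF assms(2)] by auto
  then show ?thesis unfolding Arg_iff using phir_le[of y x] assms(1) by simp
qed

lemma Arg_min: "x \<in> Arg G y \<Longrightarrow> x' \<in> G \<Longrightarrow> cst x y \<le> cst x' y"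
  unfolding Arg_iff using phir_le by metis

lemma Arg_mem: "x \<in> Arg G y \<Longrightarrow> x \<in> G"
  using Arg_iff by auto

lemma Arg_dom_phi: "x \<in> Arg G y \<Longrightarrow> y \<in> dom_phi G"
  using Arg_iff by auto

lemma Arg_phir: "x \<in> Arg G y \<Longrightarrow> phir G y = cst x y"
  using Arg_iff by auto

lemma dom_phi_fst_approx:
  assumes z: "z \<in> dom_phi G" and e: "e > 0"
  shows "\<exists>x\<in>G. fst x < fst z + e"
proof (rule ccontr)
  assume "\<not> ?thesis"
  then have far: "\<forall>x\<in>G. fst z + e \<le> fst x" by auto
  then have "bdd_below (fst ` G)" unfolding bdd_below_def by auto
  then have "\<not> bdd_below (snd ` G)" using not_bdd_below_fst_snd by blast
  then obtain x where x: "x \<in> G" "snd x < snd z - \<bar>phir G z\<bar> / e - 1"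
    using not_bdd_below_ex[of "snd ` G" "snd z - \<bar>phir G z\<bar> / e - 1"] by auto
  have low: "snd x - snd z < - \<bar>phir G z\<bar> / e - 1" using x by simp
  moreover have "0 \<le> \<bar>phir G z\<bar> / e" using e by simp
  ultimately have neg: "snd x - snd z < 0" by linarith
  have "e \<le> fst x - fst z" using far x(1) by auto
  then have "cst x z \<le> e * (snd x - snd z)"
    unfolding cst_def using mult_right_mono_neg[of e _ "snd x - snd z"] neg by simp
  also have "\<dots> < e * (- \<bar>phir G z\<bar> / e - 1)" using low e by simp
  also have "\<dots> = - \<bar>phir G z\<bar> - e" using e by (simp add: field_simps)
  finally show False using phir_le[OF z x(1)] e by linarith
qed

lemma dom_phi_approx:
  assumes z: "z \<in> dom_phi G" and e: "e > 0"
  shows "\<exists>x\<in>G. fst x < fst z + e" "\<exists>x\<in>G. snd x < snd z + e"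
    "\<exists>x\<in>G. fst z - e < fst x" "\<exists>x\<in>G. snd z - e < snd x"
proof -
  interpret S: max_monotone "prod.swap ` G" by (rule image_max_monotone[OF cst_symmetry_swap])
  interpret N: max_monotone "uminus ` G" by (rule image_max_monotone[OF cst_symmetry_uminus])
  interpret NS: max_monotone "prod.swap ` uminus ` G"
    by (rule N.image_max_monotone[OF cst_symmetry_swap])
  show "\<exists>x\<in>G. fst x < fst z + e" using dom_phi_fst_approx[OF z e] .
  have "prod.swap z \<in> dom_phi (prod.swap ` G)"
    using z by (simp add: dom_phi_image[OF cst_symmetry_swap] cst_symmetry_swap)
  from S.dom_phi_fst_approx[OF this e] show "\<exists>x\<in>G. snd x < snd z + e" by auto
  have "- z \<in> dom_phi (uminus ` G)"
    using z by (simp add: dom_phi_image[OF cst_symmetry_uminus] cst_symmetry_uminus)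
  from N.dom_phi_fst_approx[OF this e] show "\<exists>x\<in>G. fst z - e < fst x" by force
  have "prod.swap (- z) \<in> dom_phi (prod.swap ` uminus ` G)"
    using z by (simp add: dom_phi_image cst_symmetry_swap cst_symmetry_uminus)
  from NS.dom_phi_fst_approx[OF this e] show "\<exists>x\<in>G. snd z - e < snd x" by force
qed

lemma surrounds_iff:
  "surrounds G y \<longleftrightarrow> (\<exists>a\<in>G. fst a < fst y) \<and> (\<exists>a\<in>G. snd a < snd y)
     \<and> (\<exists>b\<in>G. fst y < fst b) \<and> (\<exists>b\<in>G. snd y < snd b)"
proof
  assume "(\<exists>a\<in>G. fst a < fst y) \<and> (\<exists>a\<in>G. snd a < snd y) \<and> (\<exists>b\<in>G. fst y < fst b) \<and> (\<exists>b\<in>G. snd y < snd b)"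
  then obtain a a' b b' where "a \<in> G" "a' \<in> G" "b \<in> G" "b' \<in> G"
    "fst a < fst y" "snd a' < snd y" "fst y < fst b" "snd y < snd b'" by blast
  with common_lower_point[of a a'] common_upper_point[of b b'] show "surrounds G y"
    unfolding surrounds_def by (meson le_less_trans less_le_trans)
qed (auto simp: surrounds_def)

lemma cst_bounds_between:
  assumes a: "a \<in> G" and b: "b \<in> G" and x: "x \<in> G" and h: "h > 0"
    and z: "fst a + h \<le> fst z" "snd a + h \<le> snd z" "fst z + h \<le> fst b" "snd z + h \<le> snd b"
  defines "V \<equiv> max (fst b - fst a) (snd b - snd a)"
  shows "- (V * V) \<le> cst x z" "\<bar>fst x - fst z\<bar> \<le> max V (\<bar>cst x z\<bar> / h)"
    "\<bar>snd x - snd z\<bar> \<le> max V (\<bar>cst x z\<bar> / h)"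
proof -
  consider "fst x \<le> fst a" "snd x \<le> snd a" | "fst b \<le> fst x" "snd b \<le> snd x"
    | "fst a \<le> fst x" "snd a \<le> snd x" "fst x \<le> fst b" "snd x \<le> snd b"
    using comparable[OF x a] comparable[OF x b] by linarith
  then have "- (V * V) \<le> cst x z \<and> \<bar>fst x - fst z\<bar> \<le> max V (\<bar>cst x z\<bar> / h)
      \<and> \<bar>snd x - snd z\<bar> \<le> max V (\<bar>cst x z\<bar> / h)"
  proof cases
    case 1
    then have hp: "h \<le> fst z - fst x" "h \<le> snd z - snd x" using z by linarith+
    have c: "cst x z = (fst z - fst x) * (snd z - snd x)" unfolding cst_def by (simp add: algebra_simps)
    have p: "0 \<le> (fst z - fst x) * (snd z - snd x)" using hp h by simp
    have "- (V * V) \<le> cst x z" using p zero_le_square[of V] unfolding c by linarith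
    moreover have "\<bar>fst x - fst z\<bar> \<le> \<bar>cst x z\<bar> / h" "\<bar>snd x - snd z\<bar> \<le> \<bar>cst x z\<bar> / h"
      using le_product_div[OF h hp] hp h unfolding c abs_of_nonneg[OF p] abs_le_iff
      by (intro conjI; linarith)+
    ultimately show ?thesis by auto
  next
    case 2
    then have hp: "h \<le> fst x - fst z" "h \<le> snd x - snd z" using z by linarith+
    have c: "cst x z = (fst x - fst z) * (snd x - snd z)" unfolding cst_def ..
    have p: "0 \<le> (fst x - fst z) * (snd x - snd z)" using hp h by simp
    have "- (V * V) \<le> cst x z" using p zero_le_square[of V] unfolding c by linarith
    moreover have "\<bar>fst x - fst z\<bar> \<le> \<bar>cst x z\<bar> / h" "\<bar>snd x - snd z\<bar> \<le> \<bar>cst x z\<bar> / h"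
      using le_product_div[OF h hp] hp h unfolding c abs_of_nonneg[OF p] abs_le_iff
      by (intro conjI; linarith)+
    ultimately show ?thesis by auto
  next
    case 3
    then have d: "\<bar>fst x - fst z\<bar> \<le> V" "\<bar>snd x - snd z\<bar> \<le> V"
      using z h unfolding V_def by (auto simp: abs_le_iff)
    then have "\<bar>cst x z\<bar> \<le> V * V" unfolding cst_def abs_mult by (intro mult_mono) auto
    then show ?thesis using d by auto
  qed
  then show "- (V * V) \<le> cst x z" "\<bar>fst x - fst z\<bar> \<le> max V (\<bar>cst x z\<bar> / h)"
    "\<bar>snd x - snd z\<bar> \<le> max V (\<bar>cst x z\<bar> / h)" by auto
qed

lemma surrounds_local_bounds:
  assumes "surrounds G y"
  obtains r W where "r > 0" "\<And>z x. dist z y < r \<Longrightarrow> x \<in> G \<Longrightarrow> - W \<le> cst x z"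
    "\<And>M. \<exists>R. \<forall>z x. dist z y < r \<longrightarrow> x \<in> G \<longrightarrow> cst x z \<le> M \<longrightarrow> norm x \<le> R"
proof -
  obtain a b where a: "a \<in> G" "fst a < fst y" "snd a < snd y"
    and b: "b \<in> G" "fst y < fst b" "snd y < snd b"
    using assms unfolding surrounds_def by blast
  define h where "h = min (min (fst y - fst a) (snd y - snd a)) (min (fst b - fst y) (snd b - snd y)) / 2"
  define V where "V = max (fst b - fst a) (snd b - snd a)"
  have h: "h > 0" unfolding h_def using a b by simp
  have h2: "2 * h \<le> fst y - fst a" "2 * h \<le> snd y - snd a" "2 * h \<le> fst b - fst y" "2 * h \<le> snd b - snd y"
    unfolding h_def by auto
  have near: "\<bar>fst z - fst y\<bar> < h" "\<bar>snd z - snd y\<bar> < h" if "dist z y < h" for z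
    using that abs_fst_diff_le_dist[of z y] abs_snd_diff_le_dist[of z y] by linarith+
  have between: "fst a + h \<le> fst z" "snd a + h \<le> snd z" "fst z + h \<le> fst b" "snd z + h \<le> snd b"
    if "dist z y < h" for z
    using near[OF that] h2 unfolding abs_less_iff by linarith+
  have bounds: "- (V * V) \<le> cst x z" "\<bar>fst x - fst z\<bar> \<le> max V (\<bar>cst x z\<bar> / h)"
    "\<bar>snd x - snd z\<bar> \<le> max V (\<bar>cst x z\<bar> / h)" if "x \<in> G" "dist z y < h" for x z
    using cst_bounds_between[OF a(1) b(1) that(1) h between[OF that(2)]] unfolding V_def by auto
  show ?thesis
  proof
    show "- (V * V) \<le> cst x z" if "dist z y < h" "x \<in> G" for z x
      using bounds(1)[OF that(2,1)] .
    show "\<exists>R. \<forall>z x. dist z y < h \<longrightarrow> x \<in> G \<longrightarrow> cst x z \<le> M \<longrightarrow> norm x \<le> R" for M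
    proof (intro exI allI impI)
      define Q where "Q = max V (max \<bar>M\<bar> (V * V) / h)"
      fix z x assume z: "dist z y < h" and x: "x \<in> G" and M: "cst x z \<le> M"
      have "\<bar>cst x z\<bar> \<le> max \<bar>M\<bar> (V * V)" using bounds(1)[OF x z] M by linarith
      then have "\<bar>cst x z\<bar> / h \<le> max \<bar>M\<bar> (V * V) / h" using h by (simp add: divide_right_mono)
      then have "\<bar>fst x - fst z\<bar> \<le> Q" "\<bar>snd x - snd z\<bar> \<le> Q"
        using bounds(2,3)[OF x z] unfolding Q_def by linarith+
      then show "norm x \<le> \<bar>fst y\<bar> + \<bar>snd y\<bar> + 2 * h + 2 * Q"
        using near[OF z] norm_le_abs_fst_abs_snd[of x] by linarith
    qed
  qed (rule h)
qed

lemma surrounds_if_interior: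
  assumes "y \<in> interior (dom_phi G)" shows "surrounds G y"
proof -
  obtain r where r: "r > 0" "ball y r \<subseteq> dom_phi G" using assms by (meson mem_interior)
  have "y + v \<in> dom_phi G" if "norm v = r/2" for v
    using that r by (intro subsetD[OF r(2)]) (simp add: dist_norm)
  then have d: "y + (- r/2, 0) \<in> dom_phi G" "y + (0, - r/2) \<in> dom_phi G"
    "y + (r/2, 0) \<in> dom_phi G" "y + (0, r/2) \<in> dom_phi G"
    using r(1) by (simp_all add: norm_Pair)
  have r2: "r/2 > 0" using r(1) by simp
  have "\<exists>a\<in>G. fst a < fst y" using dom_phi_approx(1)[OF d(1) r2] by simp
  moreover have "\<exists>a\<in>G. snd a < snd y" using dom_phi_approx(2)[OF d(2) r2] by simp
  moreover have "\<exists>b\<in>G. fst y < fst b" using dom_phi_approx(3)[OF d(3) r2] by simp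
  moreover have "\<exists>b\<in>G. snd y < snd b" using dom_phi_approx(4)[OF d(4) r2] by simp
  ultimately show ?thesis unfolding surrounds_iff by blast
qed

lemma interior_if_surrounds:
  assumes "surrounds G y" shows "y \<in> interior (dom_phi G)"
proof -
  obtain r W where r: "r > 0" "\<And>z x. dist z y < r \<Longrightarrow> x \<in> G \<Longrightarrow> - W \<le> cst x z"
    using surrounds_local_bounds[OF assms] by metis
  have "z \<in> dom_phi G" if "z \<in> ball y r" for z
    using that r(2)[of z] by (intro dom_phiI(1)[of "- W"]) (simp add: dist_commute)
  then show ?thesis using r(1) by (meson mem_interior subsetI)
qed

lemma interior_dom_phi_iff: "y \<in> interior (dom_phi G) \<longleftrightarrow> surrounds G y"
  using surrounds_if_interior interior_if_surrounds by blast

lemma Arg_nonempty: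
  assumes "y \<in> interior (dom_phi G)" obtains x where "x \<in> Arg G y"
proof -
  obtain x0 where x0: "x0 \<in> G" using nonempty by auto
  obtain r where r: "r > 0"
    "\<And>M. \<exists>R. \<forall>z x. dist z y < r \<longrightarrow> x \<in> G \<longrightarrow> cst x z \<le> M \<longrightarrow> norm x \<le> R"
    using surrounds_local_bounds[OF surrounds_if_interior[OF assms]] by metis
  then obtain R where R: "\<And>x. x \<in> G \<Longrightarrow> cst x y \<le> cst x0 y \<Longrightarrow> norm x \<le> R"
    by (metis dist_self)
  define K where "K = G \<inter> cball 0 R"
  have "compact K" unfolding K_def using closed by (intro closed_Int_compact) auto
  moreover have "x0 \<in> K" unfolding K_def using R x0 by auto
  moreover have "continuous_on K (\<lambda>x. cst x y)" unfolding cst_def by (intro continuous_intros)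
  ultimately obtain k where k: "k \<in> K" "\<And>x. x \<in> K \<Longrightarrow> cst k y \<le> cst x y"
    using continuous_attains_inf[of K "\<lambda>x. cst x y"] by blast
  have "cst k y \<le> cst x y" if x: "x \<in> G" for x
  proof (cases "norm x \<le> R")
    case True
    then show ?thesis using k x unfolding K_def by simp
  next
    case False
    then have "cst x0 y < cst x y" using R[OF x] by fastforce
    moreover have "cst k y \<le> cst x0 y" using k \<open>x0 \<in> K\<close> by blast
    ultimately show ?thesis by simp
  qed
  then show ?thesis using that ArgI k(1) unfolding K_def by blast
qed

end

section \<open>Differentiability in the interior of the domain\<close>

definition cst_grad :: "pt \<Rightarrow> pt \<Rightarrow> pt" where
  "cst_grad x y = prod.swap (y - x)"

definition cst_grad_inv :: "pt \<Rightarrow> pt \<Rightarrow> pt" where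
  "cst_grad_inv y g = y - prod.swap g"

lemma cst_grad_inv_cst_grad [simp]: "cst_grad_inv y (cst_grad x y) = x"
  unfolding cst_grad_inv_def cst_grad_def by (simp add: prod_eq_iff)

lemma cst_grad_cst_grad_inv [simp]: "cst_grad (cst_grad_inv y g) y = g"
  unfolding cst_grad_inv_def cst_grad_def by (simp add: prod_eq_iff)

lemma Dc_eq_cst_grad_inv: "Dc G y = cst_grad_inv y (grad G y)"
  unfolding Dc_def cst_grad_inv_def by (simp add: prod_eq_iff)

lemma cst_grad_eq: "cst_grad x y = (snd y - snd x, fst y - fst x)"
  unfolding cst_grad_def by (simp add: prod.swap_def)

lemma norm_swap [simp]: "norm (prod.swap (v :: pt)) = norm v"
  by (cases v) (simp add: norm_Pair add.commute)

lemma norm_cst_grad_diff: "norm (cst_grad a w - cst_grad b y) \<le> norm (w - y) + norm (a - b)"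
proof -
  have "cst_grad a w - cst_grad b y = prod.swap ((w - y) - (a - b))"
    unfolding cst_grad_def by (simp add: prod_eq_iff)
  then show ?thesis using norm_triangle_ineq4[of "w - y" "a - b"] by simp
qed

lemma norm_cst_grad_inv_diff: "norm (cst_grad_inv w g - cst_grad_inv y D) \<le> norm (w - y) + norm (g - D)"
proof -
  have "cst_grad_inv w g - cst_grad_inv y D = (w - y) - prod.swap (g - D)"
    unfolding cst_grad_inv_def by (simp add: prod_eq_iff)
  then show ?thesis using norm_triangle_ineq4[of "w - y" "prod.swap (g - D)"] by simp
qed

lemma cst_taylor:
  "cst x w = cst x y + inner (w - y) (cst_grad x y) + (fst w - fst y) * (snd w - snd y)"
  unfolding cst_def cst_grad_eq by (cases w; cases y; simp add: algebra_simps)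

lemma abs_mult_diff_le_norm_square: "\<bar>(fst w - fst y) * (snd w - snd y)\<bar> \<le> norm (w - y) * norm (w - y)"
  using abs_fst_le_norm[of "w - y"] abs_snd_le_norm[of "w - y"] unfolding abs_mult
  by (intro mult_mono) auto

lemma has_gderiv_cst: "GDERIV (\<lambda>z. cst x z) y :> cst_grad x y"
proof -
  have "((\<lambda>z. (fst x - fst z) * (snd x - snd z)) has_derivative
      (\<lambda>h. (fst x - fst y) * (0 - snd h) + (0 - fst h) * (snd x - snd y))) (at y)"
    by (intro has_derivative_mult has_derivative_diff has_derivative_const
        bounded_linear_imp_has_derivative bounded_linear_fst bounded_linear_snd)
  then show ?thesis unfolding gderiv_def cst_grad_eq cst_def
    by (rule has_derivative_eq_rhs) (auto simp: algebra_simps fun_eq_iff)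
qed

lemma cst_lipschitz:
  assumes "dist w y \<le> 1"
  shows "\<bar>cst a w - cst a y\<bar> \<le> (norm a + norm y + 1) * dist w y"
proof -
  have "\<bar>inner (w - y) (cst_grad a y)\<bar> \<le> dist w y * (norm a + norm y)"
    using Cauchy_Schwarz_ineq2[of "w - y" "cst_grad a y"] norm_triangle_ineq4[of y a]
      mult_left_mono[of "norm (y - a)" "norm a + norm y" "dist w y"]
    unfolding cst_grad_def by (simp add: dist_norm norm_minus_commute)
  moreover have "\<bar>(fst w - fst y) * (snd w - snd y)\<bar> \<le> dist w y"
    using abs_mult_diff_le_norm_square[of w y] mult_left_mono[of "dist w y" 1 "dist w y"] assms
    by (simp add: dist_norm)
  ultimately show ?thesis using cst_taylor[of a w y] by (simp add: algebra_simps)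
qed

lemma cst_continuous:
  assumes "\<eta> > 0" shows "\<exists>\<delta>>0. \<delta> \<le> 1 \<and> (\<forall>w. dist w y < \<delta> \<longrightarrow> \<bar>cst a w - cst a y\<bar> < \<eta>)"
proof -
  define L where "L = norm a + norm y + 1"
  have L: "L > 0" unfolding L_def by (simp add: add_nonneg_pos)
  define \<delta> where "\<delta> = min 1 (\<eta> / (2 * L))"
  have d: "\<delta> > 0" "\<delta> \<le> 1" unfolding \<delta>_def using assms L by auto
  have "\<bar>cst a w - cst a y\<bar> < \<eta>" if w: "dist w y < \<delta>" for w
  proof -
    have "\<bar>cst a w - cst a y\<bar> \<le> L * dist w y" using cst_lipschitz[of w y a] w d unfolding L_def by simp
    also have "\<dots> \<le> L * (\<eta> / (2 * L))" using w L unfolding \<delta>_def by (intro mult_left_mono) auto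
    also have "\<dots> = \<eta> / 2" using L by simp
    finally show ?thesis using assms by linarith
  qed
  then show ?thesis using d by blast
qed

context max_monotone
begin

lemma gderiv_phir_eq_cst_grad:
  assumes y: "y \<in> interior (dom_phi G)" and D: "GDERIV (phir G) y :> D" and x: "x \<in> Arg G y"
  shows "D = cst_grad x y"
proof -
  have d: "GDERIV (\<lambda>z. cst x z - phir G z) y :> (cst_grad x y - D)"
    by (rule GDERIV_diff[OF has_gderiv_cst D])
  have "cst x y - phir G y \<le> cst x z - phir G z" if "z \<in> interior (dom_phi G)" for z
    using phir_le[OF subsetD[OF interior_subset that] Arg_mem[OF x]] Arg_phir[OF x] by simp
  then have "\<forall>\<^sub>F z in at y. cst x y - phir G y \<le> cst x z - phir G z"
    unfolding eventually_at_topological using y by blast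
  from has_derivative_local_min[OF d[unfolded gderiv_def] this]
  have "inner (cst_grad x y - D) (cst_grad x y - D) = 0" by metis
  then show ?thesis by simp
qed

lemma Arg_eq_if_gderiv:
  assumes y: "y \<in> interior (dom_phi G)" and D: "GDERIV (phir G) y :> D"
  shows "Arg G y = {cst_grad_inv y D}"
proof -
  obtain x where x: "x \<in> Arg G y" using Arg_nonempty[OF y] .
  have "x' = cst_grad_inv y D" if "x' \<in> Arg G y" for x'
    using gderiv_phir_eq_cst_grad[OF y D that] by simp
  then show ?thesis using x by blast
qed

lemma diff_pts_gderiv: "y \<in> diff_pts G \<Longrightarrow> GDERIV (phir G) y :> cgrad G y"
  unfolding diff_pts_def cgrad_def by (metis (mono_tags, lifting) mem_Collect_eq someI)

lemma Arg_diff_pts: assumes "y \<in> diff_pts G" shows "Arg G y = {cst_grad_inv y (cgrad G y)}"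
proof -
  have "y \<in> interior (dom_phi G)" using assms unfolding diff_pts_def by blast
  then show ?thesis using Arg_eq_if_gderiv diff_pts_gderiv[OF assms] by blast
qed

lemma Arg_singleton_gap:
  assumes A: "Arg G y = {x}" and e: "e > 0"
  obtains \<eta> where "\<eta> > 0"
    "\<And>x'. x' \<in> G \<Longrightarrow> norm x' \<le> R \<Longrightarrow> e \<le> norm (x' - x) \<Longrightarrow> cst x y + \<eta> \<le> cst x' y"
proof -
  have xA: "x \<in> Arg G y" using A by auto
  define K where "K = G \<inter> cball 0 R \<inter> {x'. e \<le> norm (x' - x)}"
  show ?thesis
  proof (cases "K = {}")
    case True
    show ?thesis
    proof (rule that[of 1])
      fix x' assume "x' \<in> G" "norm x' \<le> R" "e \<le> norm (x' - x)"
      then have "x' \<in> K" unfolding K_def by simp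
      then show "cst x y + 1 \<le> cst x' y" using True by simp
    qed simp
  next
    case False
    have "compact K" unfolding K_def
      by (intro compact_Int_closed closed_Int_compact closed compact_cball closed_Collect_le continuous_intros)
    moreover have "continuous_on K (\<lambda>x'. cst x' y)" unfolding cst_def by (intro continuous_intros)
    ultimately obtain k where k: "k \<in> K" "\<And>x'. x' \<in> K \<Longrightarrow> cst k y \<le> cst x' y"
      using continuous_attains_inf[OF _ False] by blast
    have kG: "k \<in> G" using k(1) unfolding K_def by blast
    have "k \<notin> Arg G y" using A k(1) e unfolding K_def by auto
    then have "cst x y \<noteq> cst k y" using kG xA unfolding Arg_iff by auto
    then have "cst x y < cst k y" using Arg_min[OF xA kG] by simp
    show ?thesis
    proof (rule that[of "cst k y - cst x y"])
      fix x' assume "x' \<in> G" "norm x' \<le> R" "e \<le> norm (x' - x)"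
      then have "x' \<in> K" unfolding K_def by simp
      then show "cst x y + (cst k y - cst x y) \<le> cst x' y" using k(2) by simp
    qed (use \<open>cst x y < cst k y\<close> in simp)
  qed
qed

lemma Arg_stable:
  assumes A: "Arg G y = {x}" and e: "e > 0"
  shows "\<exists>d>0. \<forall>w x'. dist w y < d \<longrightarrow> x' \<in> Arg G w \<longrightarrow> norm x' \<le> R \<longrightarrow> norm (x' - x) < e"
proof -
  have xA: "x \<in> Arg G y" using A by auto
  obtain \<eta> where \<eta>: "\<eta> > 0"
    "\<And>x'. x' \<in> G \<Longrightarrow> norm x' \<le> R \<Longrightarrow> e \<le> norm (x' - x) \<Longrightarrow> cst x y + \<eta> \<le> cst x' y"
    using Arg_singleton_gap[OF A e] by blast
  define L where "L = max R (norm x) + norm y + 1"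
  have "L > 0" unfolding L_def by (auto simp: add_nonneg_pos le_max_iff_disj)
  define d where "d = min 1 (\<eta> / (3 * L))"
  have d: "d > 0" "d \<le> 1" "3 * (L * d) \<le> \<eta>"
    unfolding d_def using \<open>\<eta> > 0\<close> \<open>L > 0\<close> by (auto simp: min_def field_simps)
  have "norm (x' - x) < e" if w: "dist w y < d" and x': "x' \<in> Arg G w" "norm x' \<le> R" for w x'
  proof (rule ccontr)
    assume "\<not> norm (x' - x) < e"
    then have far: "cst x y + \<eta> \<le> cst x' y" using \<eta>(2) Arg_mem[OF x'(1)] x'(2) by simp
    have Ld: "3 * (L * dist w y) \<le> \<eta>"
      using w d mult_left_mono[of "dist w y" d L] \<open>L > 0\<close> by linarith
    have "norm x' + norm y + 1 \<le> L" "norm x + norm y + 1 \<le> L" unfolding L_def using x'(2) by auto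
    then have "\<bar>cst x' w - cst x' y\<bar> \<le> L * dist w y" "\<bar>cst x w - cst x y\<bar> \<le> L * dist w y"
      using cst_lipschitz[of w y] w d(2) by (meson less_le_trans order.strict_implies_order order_trans
          mult_right_mono zero_le_dist)+
    moreover have "cst x' w \<le> cst x w" using Arg_min[OF x'(1) Arg_mem[OF xA]] .
    ultimately show False using Ld far \<open>\<eta> > 0\<close> unfolding abs_le_iff by (elim conjE) linarith
  qed
  then show ?thesis using d by blast
qed

lemma phir_first_order:
  assumes x: "x \<in> Arg G y" and xw: "xw \<in> Arg G w"
  shows "\<bar>phir G w - phir G y - inner (w - y) (cst_grad x y)\<bar>
    \<le> norm (w - y) * (norm (xw - x) + norm (w - y))"
proof -
  define q where "q = (fst w - fst y) * (snd w - snd y)"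
  have q: "\<bar>q\<bar> \<le> norm (w - y) * norm (w - y)" unfolding q_def by (rule abs_mult_diff_le_norm_square)
  have up: "phir G w - phir G y - inner (w - y) (cst_grad x y) \<le> q"
    using phir_le[OF Arg_dom_phi[OF xw] Arg_mem[OF x]] Arg_phir[OF x] cst_taylor[of x w y]
    unfolding q_def by linarith
  have lo: "inner (w - y) (cst_grad xw y - cst_grad x y) + q \<le> phir G w - phir G y - inner (w - y) (cst_grad x y)"
    using phir_le[OF Arg_dom_phi[OF x] Arg_mem[OF xw]] Arg_phir[OF xw] cst_taylor[of xw w y]
    unfolding q_def inner_diff_right by linarith
  have "\<bar>inner (w - y) (cst_grad xw y - cst_grad x y)\<bar> \<le> norm (w - y) * norm (cst_grad xw y - cst_grad x y)"
    by (rule Cauchy_Schwarz_ineq2)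
  also have "\<dots> \<le> norm (w - y) * norm (xw - x)"
    using norm_cst_grad_diff[of xw y x y] by (intro mult_left_mono) auto
  finally show ?thesis using up lo q by (simp add: algebra_simps abs_le_iff)
qed

lemma Arg_near_cst_bound:
  assumes "x \<in> G" "\<eta> > 0"
  obtains \<delta> where "\<delta> > 0" "\<delta> \<le> 1" "\<And>w xw. dist w y < \<delta> \<Longrightarrow> xw \<in> Arg G w \<Longrightarrow> cst xw w < cst x y + \<eta>"
proof -
  obtain \<delta> where \<delta>: "\<delta> > 0" "\<delta> \<le> 1" "\<forall>w. dist w y < \<delta> \<longrightarrow> \<bar>cst x w - cst x y\<bar> < \<eta>"
    using cst_continuous[OF assms(2)] by blast
  have "cst xw w < cst x y + \<eta>" if "dist w y < \<delta>" "xw \<in> Arg G w" for w xw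
    using Arg_min[OF that(2) assms(1)] \<delta>(3) that(1) by fastforce
  then show ?thesis using that \<delta> by blast
qed

lemma Arg_locally_bounded:
  assumes y: "y \<in> interior (dom_phi G)"
  obtains r R where "r > 0" "ball y r \<subseteq> interior (dom_phi G)"
    "\<And>w xw. dist w y < r \<Longrightarrow> xw \<in> Arg G w \<Longrightarrow> norm xw \<le> R"
proof -
  obtain x where x: "x \<in> Arg G y" using Arg_nonempty[OF y] .
  obtain r1 where r1: "r1 > 0"
    "\<And>M. \<exists>R. \<forall>z x. dist z y < r1 \<longrightarrow> x \<in> G \<longrightarrow> cst x z \<le> M \<longrightarrow> norm x \<le> R"
    using surrounds_local_bounds[OF surrounds_if_interior[OF y]] by metis
  then obtain R where R: "\<And>z x'. dist z y < r1 \<Longrightarrow> x' \<in> G \<Longrightarrow> cst x' z \<le> cst x y + 1 \<Longrightarrow> norm x' \<le> R"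
    by metis
  obtain r2 where r2: "r2 > 0" "\<And>w xw. dist w y < r2 \<Longrightarrow> xw \<in> Arg G w \<Longrightarrow> cst xw w < cst x y + 1"
    using Arg_near_cst_bound[OF Arg_mem[OF x] zero_less_one, where y = y] by blast
  obtain r3 where r3: "r3 > 0" "ball y r3 \<subseteq> interior (dom_phi G)"
    using y open_contains_ball open_interior by blast
  show ?thesis
  proof (rule that)
    show "Min {r1, r2, r3} > 0" using r1(1) r2(1) r3(1) by simp
    show "ball y (Min {r1, r2, r3}) \<subseteq> interior (dom_phi G)" using r3(2) by auto
    show "norm xw \<le> R" if w: "dist w y < Min {r1, r2, r3}" and xw: "xw \<in> Arg G w" for w xw
    proof -
      have "dist w y < r1" "dist w y < r2" using w by auto
      then show ?thesis using R[OF _ Arg_mem[OF xw]] r2(2)[OF _ xw] by (simp add: less_imp_le)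
    qed
  qed
qed

lemma gderiv_phir_if_Arg_singleton:
  assumes y: "y \<in> interior (dom_phi G)" and A: "Arg G y = {x}"
  shows "GDERIV (phir G) y :> cst_grad x y"
proof -
  have xA: "x \<in> Arg G y" using A by auto
  obtain r R where r: "r > 0" "ball y r \<subseteq> interior (dom_phi G)"
    and R: "\<And>w xw. dist w y < r \<Longrightarrow> xw \<in> Arg G w \<Longrightarrow> norm xw \<le> R"
    using Arg_locally_bounded[OF y] by blast
  show ?thesis unfolding gderiv_def has_derivative_at_alt
  proof (intro conjI allI impI bounded_linear_inner_left)
    fix e :: real assume e: "e > 0"
    obtain d1 where d1: "d1 > 0"
      "\<forall>w x'. dist w y < d1 \<longrightarrow> x' \<in> Arg G w \<longrightarrow> norm x' \<le> R \<longrightarrow> norm (x' - x) < e/2"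
      using Arg_stable[OF A, of "e/2" R] e by auto
    define d where "d = Min {r, d1, e/2}"
    have d: "d > 0" "d \<le> r" "d \<le> d1" "d \<le> e/2" unfolding d_def using r d1 e by auto
    show "\<exists>d>0. \<forall>w. norm (w - y) < d \<longrightarrow>
        norm (phir G w - phir G y - inner (w - y) (cst_grad x y)) \<le> e * norm (w - y)"
    proof (intro exI[of _ d] conjI allI impI d)
      fix w assume w: "norm (w - y) < d"
      then have dw: "dist w y < d" by (simp add: dist_norm)
      then have "w \<in> interior (dom_phi G)" using r d by (auto simp: dist_commute)
      then obtain xw where xw: "xw \<in> Arg G w" by (rule Arg_nonempty)
      have "dist w y < r" "dist w y < d1" using dw d by simp_all
      then have "norm (xw - x) < e/2" using R[OF _ xw] d1(2) xw by blast
      moreover have "norm (w - y) < e/2" using w d by simp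
      ultimately have "norm (w - y) * (norm (xw - x) + norm (w - y)) \<le> e * norm (w - y)"
        using mult_left_mono[of "norm (xw - x) + norm (w - y)" e "norm (w - y)"] by (simp add: mult.commute)
      then show "norm (phir G w - phir G y - inner (w - y) (cst_grad x y)) \<le> e * norm (w - y)"
        using phir_first_order[OF xA xw] by simp
    qed
  qed
qed

lemma Arg_diagonal_mono:
  assumes a: "a \<in> Arg G (z + (s, s))" and b: "b \<in> Arg G (z + (t, t))" and st: "s < t"
  shows "fst a + snd a \<le> fst b + snd b"
proof -
  have "cst a (z + (s, s)) \<le> cst b (z + (s, s))" "cst b (z + (t, t)) \<le> cst a (z + (t, t))"
    using Arg_min[OF a Arg_mem[OF b]] Arg_min[OF b Arg_mem[OF a]] by auto
  then have "(t - s) * ((fst a + snd a) - (fst b + snd b)) \<le> 0"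
    unfolding cst_def by (simp add: algebra_simps)
  then show ?thesis using st by (simp add: mult_le_0_iff)
qed

text \<open>A rational number between the values of \<open>fst + snd\<close> on two minimizers at \<open>z + (s, s)\<close>
  increases strictly with \<open>s\<close>, so it injects the exceptional values of \<open>s\<close> into \<open>\<rat>\<close>.\<close>

lemma countable_diagonal_non_unique:
  "countable {s. \<exists>a\<in>Arg G (z + (s, s)). \<exists>b\<in>Arg G (z + (s, s)). fst a + snd a < fst b + snd b}"
  (is "countable ?B")
proof -
  define gap where "gap s r \<longleftrightarrow> (\<exists>a\<in>Arg G (z + (s, s)). \<exists>b\<in>Arg G (z + (s, s)).
    fst a + snd a < r \<and> r < fst b + snd b)" for s r
  define q where "q s = (SOME r. r \<in> \<rat> \<and> gap s r)" for s
  have q: "q s \<in> \<rat> \<and> gap s (q s)" if "s \<in> ?B" for s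
  proof -
    from that obtain a b where "a \<in> Arg G (z + (s, s))" "b \<in> Arg G (z + (s, s))"
      "fst a + snd a < fst b + snd b" by blast
    moreover from Rats_dense_in_real[OF this(3)] obtain r where "r \<in> \<rat>"
      "fst a + snd a < r" "r < fst b + snd b" by blast
    ultimately have "\<exists>r. r \<in> \<rat> \<and> gap s r" unfolding gap_def by blast
    then show ?thesis unfolding q_def by (rule someI_ex)
  qed
  have mono: "q s < q t" if st: "s \<in> ?B" "t \<in> ?B" "s < t" for s t
  proof -
    obtain b where "b \<in> Arg G (z + (s, s))" "q s < fst b + snd b"
      using q[OF st(1)] unfolding gap_def by blast
    moreover obtain a where "a \<in> Arg G (z + (t, t))" "fst a + snd a < q t"
      using q[OF st(2)] unfolding gap_def by blast
    ultimately show ?thesis using Arg_diagonal_mono[of b z s a t] st(3) by linarith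
  qed
  have "inj_on q ?B"
  proof (rule inj_onI)
    fix s t assume "s \<in> ?B" "t \<in> ?B" "q s = q t"
    then show "s = t" using mono[of s t] mono[of t s] by (cases s t rule: linorder_cases) auto
  qed
  moreover have "q ` ?B \<subseteq> \<rat>" using q by blast
  then have "countable (q ` ?B)" using countable_rat countable_subset by blast
  ultimately show ?thesis using countable_image_inj_on by blast
qed

lemma diff_pts_dense:
  assumes z: "z \<in> interior (dom_phi G)" and e: "e > 0"
  shows "\<exists>w\<in>diff_pts G. dist w z < e"
proof -
  obtain r0 where r0: "r0 > 0" "ball z r0 \<subseteq> interior (dom_phi G)"
    using z open_contains_ball open_interior by blast
  define \<rho> where "\<rho> = min r0 e / 2"
  have \<rho>: "\<rho> > 0" unfolding \<rho>_def using r0 e by simp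
  let ?B = "{s. \<exists>a\<in>Arg G (z + (s, s)). \<exists>b\<in>Arg G (z + (s, s)). fst a + snd a < fst b + snd b}"
  have "uncountable {-\<rho><..<\<rho>}" using \<rho> uncountable_open_interval[of "- \<rho>" \<rho>] by simp
  then have "\<not> {-\<rho><..<\<rho>} \<subseteq> ?B"
    using countable_diagonal_non_unique[of z] countable_subset by blast
  then obtain s where "s \<in> {-\<rho><..<\<rho>}" "s \<notin> ?B" by blast
  then have s: "\<bar>s\<bar> < \<rho>" "s \<notin> ?B" by auto
  define p where "p = z + (s, s)"
  have "dist p z \<le> 2 * \<bar>s\<bar>" unfolding p_def using norm_le_abs_fst_abs_snd[of "(s, s)"] by (simp add: dist_norm)
  then have pz: "dist p z < min r0 e" using s(1) unfolding \<rho>_def by linarith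
  then have p: "p \<in> interior (dom_phi G)" using r0 by (auto simp: dist_commute)
  obtain x where x: "x \<in> Arg G p" using Arg_nonempty[OF p] .
  have "x' = x" if x': "x' \<in> Arg G p" for x'
  proof -
    have "\<not> fst x + snd x < fst x' + snd x'" "\<not> fst x' + snd x' < fst x + snd x"
      using s(2) x x' unfolding p_def by blast+
    then show ?thesis using eq_if_sum_eq[OF Arg_mem[OF x] Arg_mem[OF x']] by simp
  qed
  then have "Arg G p = {x}" using x by blast
  then have "p \<in> diff_pts G" unfolding diff_pts_def using p gderiv_phir_if_Arg_singleton by blast
  then show ?thesis using pz by auto
qed

lemma diff_pts_seq:
  assumes "y \<in> closure (interior (dom_phi G))"
  obtains ys where "\<And>n. ys n \<in> diff_pts G" "ys \<longlonglongrightarrow> y"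
proof -
  have "y \<in> closure (diff_pts G)" unfolding closure_approachable
  proof (intro allI impI)
    fix e :: real assume "e > 0"
    then obtain z where "z \<in> interior (dom_phi G)" "dist z y < e/2"
      using assms closure_approachable half_gt_zero by blast
    moreover obtain w where "w \<in> diff_pts G" "dist w z < e/2"
      using diff_pts_dense[OF calculation(1)] \<open>e > 0\<close> half_gt_zero by blast
    moreover have "dist w y < e" using calculation dist_triangle[of w y z] by linarith
    ultimately show "\<exists>w\<in>diff_pts G. dist w y < e" by blast
  qed
  then show ?thesis using that closure_sequential by blast
qed

end

section \<open>Convexity of the domain, the degenerate case and the set \<open>E\<close>\<close>

lemma affine_fst_line: "affine {x :: pt. fst x = c}"
proof -
  have "{x :: pt. fst x = c} = {x. inner (1, 0) x = c}" by auto
  then show ?thesis using affine_hyperplane by metis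
qed

lemma affine_snd_line: "affine {x :: pt. snd x = c}"
proof -
  have "{x :: pt. snd x = c} = {x. inner (0, 1) x = c}" by auto
  then show ?thesis using affine_hyperplane by metis
qed

lemma coord_eq_imp: "coord i a = coord i y \<Longrightarrow> fst a = fst y \<or> snd a = snd y"
  unfolding coord_def by (auto split: if_splits)

lemma mem_E_set_iff: "y \<in> E_set G \<longleftrightarrow> y \<in> G \<and> (\<exists>a\<in>G. a \<noteq> y \<and> (fst a = fst y \<or> snd a = snd y))"
proof
  assume "y \<in> E_set G"
  then obtain i where y: "y \<in> G" "coord i y \<in> T_i G i"
    unfolding E_set_def E_i_def by blast
  then obtain a b where ab: "a \<in> G" "b \<in> G" "a \<noteq> b" "coord i a = coord i y" "coord i b = coord i y"
    unfolding T_i_def E_i_def by blast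
  then obtain c where "c \<in> G" "c \<noteq> y" "coord i c = coord i y" by (cases "a = y") auto
  then show "y \<in> G \<and> (\<exists>a\<in>G. a \<noteq> y \<and> (fst a = fst y \<or> snd a = snd y))"
    using y(1) coord_eq_imp by blast
next
  assume "y \<in> G \<and> (\<exists>a\<in>G. a \<noteq> y \<and> (fst a = fst y \<or> snd a = snd y))"
  then obtain a where a: "y \<in> G" "a \<in> G" "a \<noteq> y" "fst a = fst y \<or> snd a = snd y" by blast
  from a(4) show "y \<in> E_set G"
  proof
    assume "fst a = fst y"
    then have "y \<in> E_i G 1 (fst y)" "a \<in> E_i G 1 (fst y)" using a unfolding E_i_def coord_def by auto
    then show ?thesis using a(3) unfolding E_set_def T_i_def by blast
  next
    assume "snd a = snd y"
    then have "y \<in> E_i G 2 (snd y)" "a \<in> E_i G 2 (snd y)" using a unfolding E_i_def coord_def by auto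
    then show ?thesis using a(3) unfolding E_set_def T_i_def by blast
  qed
qed

context max_monotone
begin

lemma convex_dom_phi: "convex (dom_phi G)"
proof (rule convexI)
  fix a b :: pt and u v :: real
  assume a: "a \<in> dom_phi G" and b: "b \<in> dom_phi G" and uv: "0 \<le> u" "0 \<le> v" "u + v = 1"
  define z where "z = u *\<^sub>R a + v *\<^sub>R b"
  have "u * (phir G a - fst a * snd a) + v * (phir G b - fst b * snd b) + fst z * snd z \<le> cst x z"
    if x: "x \<in> G" for x
  proof -
    have v: "v = 1 - u" using uv(3) by simp
    have "cst x z - fst z * snd z = u * (cst x a - fst a * snd a) + v * (cst x b - fst b * snd b)"
      unfolding z_def cst_def v by (simp add: algebra_simps)
    moreover have "u * (phir G a - fst a * snd a) \<le> u * (cst x a - fst a * snd a)"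
      "v * (phir G b - fst b * snd b) \<le> v * (cst x b - fst b * snd b)"
      using phir_le[OF a x] phir_le[OF b x] uv by (auto intro!: mult_left_mono)
    ultimately show ?thesis by linarith
  qed
  then show "u *\<^sub>R a + v *\<^sub>R b \<in> dom_phi G" unfolding z_def by (rule dom_phiI(1))
qed

lemma rel_frontier_dom_phi:
  assumes "interior (dom_phi G) \<noteq> {}"
  shows "rel_frontier (dom_phi G) = closure (dom_phi G) - interior (dom_phi G)"
  unfolding rel_frontier_def using rel_interior_nonempty_interior[OF assms] by simp

lemma line_if_interior_empty:
  assumes "interior (dom_phi G) = {}"
  obtains c where "G = {x. fst x = c} \<or> G = {x. snd x = c}"
proof -
  have pair: "fst a = fst b \<or> snd a = snd b" if ab: "a \<in> G" "b \<in> G" for a b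
  proof (rule ccontr)
    assume "\<not> (fst a = fst b \<or> snd a = snd b)"
    then consider "fst a < fst b" "snd a < snd b" | "fst b < fst a" "snd b < snd a"
      using comparable[OF ab] by fastforce
    then have "surrounds G ((a + b) /\<^sub>R 2)"
      using surrounds_midpoint[OF ab] surrounds_midpoint[OF ab(2,1)] by cases (simp_all add: add.commute)
    then show False using assms interior_dom_phi_iff by blast
  qed
  obtain x0 where x0: "x0 \<in> G" using nonempty by blast
  have "G \<subseteq> {x. fst x = fst x0} \<or> G \<subseteq> {x. snd x = snd x0}"
  proof (rule ccontr)
    assume "\<not> ?thesis"
    then obtain a b where "a \<in> G" "fst a \<noteq> fst x0" "b \<in> G" "snd b \<noteq> snd x0" by blast
    with pair[of a x0] pair[of b x0] pair[of a b] x0 show False by auto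
  qed
  moreover have "p \<in> G" if "G \<subseteq> {x. fst x = fst x0}" "fst p = fst x0" for p
  proof (rule mem_if_cst_nonneg)
    fix x assume "x \<in> G"
    then show "0 \<le> cst x p" using that unfolding cst_def by auto
  qed
  moreover have "p \<in> G" if "G \<subseteq> {x. snd x = snd x0}" "snd p = snd x0" for p
  proof (rule mem_if_cst_nonneg)
    fix x assume "x \<in> G"
    then show "0 \<le> cst x p" using that unfolding cst_def by auto
  qed
  ultimately show ?thesis using that by blast
qed

lemma dom_phi_fst_line:
  assumes G: "G = {x. fst x = c}" shows "dom_phi G = G"
proof (intro set_eqI iffI)
  fix p assume p: "p \<in> dom_phi G"
  show "p \<in> G"
  proof (rule ccontr)
    assume "p \<notin> G"
    then have k: "c - fst p \<noteq> 0" using G by simp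
    define t where "t = snd p - (\<bar>phir G p\<bar> + 1) / (c - fst p)"
    have "cst (c, t) p = - (\<bar>phir G p\<bar> + 1)" unfolding cst_def t_def using k by simp
    moreover have "(c, t) \<in> G" using G by simp
    ultimately show False using phir_le[OF p] by fastforce
  qed
next
  fix p assume "p \<in> G"
  then show "p \<in> dom_phi G" using G by (intro dom_phiI(1)[of 0]) (simp add: cst_def)
qed

lemma dom_phi_eq_if_interior_empty:
  assumes "interior (dom_phi G) = {}" shows "dom_phi G = G"
proof -
  interpret S: max_monotone "prod.swap ` G" by (rule image_max_monotone[OF cst_symmetry_swap])
  obtain c where "G = {x. fst x = c} \<or> G = {x. snd x = c}" using line_if_interior_empty[OF assms] .
  then show ?thesis
  proof
    assume "G = {x. snd x = c}"
    then have "prod.swap ` G = {x. fst x = c}" by (auto simp: cst_symmetry_mem_image_iff[OF cst_symmetry_swap])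
    then have "prod.swap ` dom_phi G = prod.swap ` G"
      using S.dom_phi_fst_line dom_phi_image[OF cst_symmetry_swap, of G] by simp
    then show ?thesis using cst_symmetry_image_image[OF cst_symmetry_swap] by metis
  qed (rule dom_phi_fst_line)
qed

lemma rel_frontier_empty_if_interior_empty:
  assumes "interior (dom_phi G) = {}" shows "rel_frontier (dom_phi G) = {}"
proof -
  obtain c where "G = {x. fst x = c} \<or> G = {x. snd x = c}" using line_if_interior_empty[OF assms] .
  then have "affine (dom_phi G)"
    using dom_phi_eq_if_interior_empty[OF assms] affine_fst_line affine_snd_line by auto
  then show ?thesis using rel_frontier_eq_empty by blast
qed

lemma udom_Arg_empty_if_interior_empty:
  assumes "interior (dom_phi G) = {}" shows "udom_Arg G = {}"
proof (rule ccontr)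
  assume "udom_Arg G \<noteq> {}"
  then obtain y x where A: "Arg G y = {x}" unfolding udom_Arg_def by blast
  obtain c where c: "G = {x. fst x = c} \<or> G = {x. snd x = c}" using line_if_interior_empty[OF assms] .
  have y: "y \<in> G" using Arg_dom_phi[of x y] A dom_phi_eq_if_interior_empty[OF assms] by auto
  have zero: "cst x' y = 0" if "x' \<in> G" for x'
    using c y that unfolding cst_def by auto
  have "x' \<in> Arg G y" if "x' \<in> G" for x'
    using that zero by (intro ArgI) auto
  then have "G \<subseteq> Arg G y" by blast
  moreover have "x \<in> G" using A Arg_mem by blast
  then have "(fst x, snd x + 1) \<in> G \<or> (fst x + 1, snd x) \<in> G" using c by auto
  ultimately show False using A by (auto simp: prod_eq_iff)
qed

lemma mem_E_set_if_not_interior: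
  assumes y: "y \<in> G" and ny: "y \<notin> interior (dom_phi G)" shows "y \<in> E_set G"
proof -
  have ns: "\<not> surrounds G y" using ny interior_dom_phi_iff by blast
  obtain a where a: "a \<in> G" "fst a < fst y \<or> snd a < snd y"
    using not_bdd_below_fst_snd not_bdd_below_ex[of "fst ` G" "fst y"] not_bdd_below_ex[of "snd ` G" "snd y"]
    by fastforce
  obtain b where b: "b \<in> G" "fst y < fst b \<or> snd y < snd b"
    using not_bdd_above_fst_snd not_bdd_above_ex[of "fst ` G" "fst y"] not_bdd_above_ex[of "snd ` G" "snd y"]
    by fastforce
  have "\<exists>a\<in>G. a \<noteq> y \<and> (fst a = fst y \<or> snd a = snd y)"
  proof (cases "fst a < fst y \<and> snd a < snd y")
    case True
    then have "\<not> (fst y < fst b \<and> snd y < snd b)" using ns a b unfolding surrounds_def by blast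
    then show ?thesis using b comparable[OF b(1) y] by (intro bexI[of _ b]) (auto simp: prod_eq_iff)
  next
    case False
    then show ?thesis using a comparable[OF a(1) y] by (intro bexI[of _ a]) (auto simp: prod_eq_iff)
  qed
  then show ?thesis using y mem_E_set_iff by blast
qed


end

section \<open>Gradients at boundary points\<close>

context max_monotone
begin

lemma cst_diff_Arg:
  assumes "a \<in> Arg G y" "b \<in> Arg G y"
  shows "cst a w - cst b w = inner (w - y) (cst_grad a y - cst_grad b y)"
  using Arg_phir[OF assms(1)] Arg_phir[OF assms(2)] cst_taylor[of a w y] cst_taylor[of b w y]
  by (simp add: inner_diff_right)

lemma cst_diff_lower_bound:
  assumes xb: "xb \<in> Arg G y" and xw: "xw \<in> Arg G w" and x': "x' \<in> G"
  shows "- (norm (w - y) * norm (xw - xb)) \<le> cst x' w - cst xb w"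
proof -
  have "cst xw w - cst xb w = (cst xw y - cst xb y) + inner (w - y) (cst_grad xw y - cst_grad xb y)"
    using cst_taylor[of xw w y] cst_taylor[of xb w y] by (simp add: inner_diff_right)
  moreover have "cst xb y \<le> cst xw y" using Arg_min[OF xb Arg_mem[OF xw]] .
  moreover have "\<bar>inner (w - y) (cst_grad xw y - cst_grad xb y)\<bar> \<le> norm (w - y) * norm (xw - xb)"
    using Cauchy_Schwarz_ineq2[of "w - y" "cst_grad xw y - cst_grad xb y"]
      norm_cst_grad_diff[of xw y xb y] mult_left_mono[of _ "norm (xw - xb)" "norm (w - y)"]
    by (simp add: order_trans)
  moreover have "cst xw w \<le> cst x' w" using Arg_min[OF xw x'] .
  ultimately show ?thesis by linarith
qed

lemma cst_grad_inv_Arg_boundary: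
  assumes y: "y \<in> closure (interior (dom_phi G))" "y \<notin> diff_pts G"
    and lim: "(cgrad G \<longlongrightarrow> D) (at y within diff_pts G)"
  shows "cst_grad_inv y D \<in> Arg G y"
proof -
  obtain ys where ys: "\<And>n. ys n \<in> diff_pts G" "ys \<longlonglongrightarrow> y" using diff_pts_seq[OF y(1)] by blast
  have "(\<lambda>n. cgrad G (ys n)) \<longlonglongrightarrow> D"
    using lim ys y(2) unfolding tendsto_at_iff_sequentially o_def by fastforce
  then have lim_xs: "(\<lambda>n. cst_grad_inv (ys n) (cgrad G (ys n))) \<longlonglongrightarrow> cst_grad_inv y D"
    unfolding cst_grad_inv_def prod.swap_def by (intro tendsto_intros ys(2))
  have xs: "cst_grad_inv (ys n) (cgrad G (ys n)) \<in> Arg G (ys n)" for n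
    using Arg_diff_pts[OF ys(1)] by simp
  have "cst_grad_inv y D \<in> G"
    using closed_sequentially[OF closed _ lim_xs] Arg_mem[OF xs] by blast
  moreover have "cst (cst_grad_inv y D) y \<le> cst x' y" if "x' \<in> G" for x'
  proof (rule LIMSEQ_le)
    show "(\<lambda>n. cst (cst_grad_inv (ys n) (cgrad G (ys n))) (ys n)) \<longlonglongrightarrow> cst (cst_grad_inv y D) y"
      unfolding cst_def by (intro tendsto_intros lim_xs ys(2))
    show "(\<lambda>n. cst x' (ys n)) \<longlonglongrightarrow> cst x' y"
      unfolding cst_def by (intro tendsto_intros ys(2))
  qed (use Arg_min[OF xs that] in auto)
  ultimately show ?thesis by (rule ArgI)
qed

lemma cst_diff_near_boundary:
  assumes y: "y \<notin> diff_pts G" and lim: "(cgrad G \<longlongrightarrow> D) (at y within diff_pts G)"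
    and xb: "cst_grad_inv y D \<in> Arg G y" and x': "x' \<in> G" and \<epsilon>: "\<epsilon> > 0"
  obtains \<delta> where "\<delta> > 0"
    "\<And>w. w \<in> diff_pts G \<Longrightarrow> dist w y < \<delta> \<Longrightarrow> - (\<epsilon> * dist w y) \<le> cst x' w - cst (cst_grad_inv y D) w"
proof -
  have "\<epsilon> / 2 > 0" using \<epsilon> by simp
  then obtain \<delta> where \<delta>: "\<delta> > 0"
    "\<And>w. w \<in> diff_pts G \<Longrightarrow> 0 < dist w y \<Longrightarrow> dist w y < \<delta> \<Longrightarrow> dist (cgrad G w) D < \<epsilon> / 2"
    using lim unfolding Lim_within by blast
  have "- (\<epsilon> * dist w y) \<le> cst x' w - cst (cst_grad_inv y D) w"
    if w: "w \<in> diff_pts G" "dist w y < min \<delta> (\<epsilon> / 2)" for w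
  proof -
    define xw where "xw = cst_grad_inv w (cgrad G w)"
    have xw: "xw \<in> Arg G w" unfolding xw_def using Arg_diff_pts[OF w(1)] by simp
    have "0 < dist w y" using w(1) y by auto
    then have "norm (cgrad G w - D) < \<epsilon> / 2" using \<delta>(2)[OF w(1)] w(2) by (simp add: dist_norm)
    moreover have "norm (xw - cst_grad_inv y D) \<le> norm (w - y) + norm (cgrad G w - D)"
      unfolding xw_def by (rule norm_cst_grad_inv_diff)
    moreover have "norm (w - y) < \<epsilon> / 2" using w(2) by (simp add: dist_norm)
    ultimately have "norm (xw - cst_grad_inv y D) \<le> \<epsilon>" by linarith
    then have "norm (w - y) * norm (xw - cst_grad_inv y D) \<le> norm (w - y) * \<epsilon>"
      by (rule mult_left_mono) simp
    moreover have "norm (w - y) * \<epsilon> = \<epsilon> * dist w y" by (simp add: dist_norm)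
    ultimately show ?thesis using cst_diff_lower_bound[OF xb xw x'] by linarith
  qed
  then show ?thesis using that[of "min \<delta> (\<epsilon> / 2)"] \<delta>(1) \<epsilon> by simp
qed

text \<open>The difference \<open>cst x' - cst (cst_grad_inv y D)\<close> is affine; if it were negative at \<open>z\<close>, it
  would decrease linearly along the segment from \<open>y\<close> towards \<open>z\<close>, contradicting
  \<open>cst_diff_near_boundary\<close> at differentiability points near that segment.\<close>

lemma cst_grad_inv_Arg_min_boundary:
  assumes yc: "y \<in> closure (dom_phi G)" "y \<notin> diff_pts G"
    and lim: "(cgrad G \<longlongrightarrow> D) (at y within diff_pts G)"
    and xb: "cst_grad_inv y D \<in> Arg G y" and x': "x' \<in> Arg G y" and z: "z \<in> interior (dom_phi G)"
  shows "cst (cst_grad_inv y D) z \<le> cst x' z"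
proof (rule ccontr)
  define g where "g = cst_grad x' y - cst_grad (cst_grad_inv y D) y"
  have ell: "cst x' w - cst (cst_grad_inv y D) w = inner (w - y) g" for w
    unfolding g_def by (rule cst_diff_Arg[OF x' xb])
  assume "\<not> cst (cst_grad_inv y D) z \<le> cst x' z"
  then have "inner (z - y) g < 0" using ell[of z] by simp
  define \<kappa> where "\<kappa> = - inner (z - y) g"
  have \<kappa>: "\<kappa> > 0" unfolding \<kappa>_def using \<open>inner (z - y) g < 0\<close> by simp
  then have "z \<noteq> y" unfolding \<kappa>_def by auto
  define V where "V = norm (z - y) + 1"
  have V: "V > 0" unfolding V_def by (simp add: add_nonneg_pos)
  have "\<kappa> / (4 * V) > 0" using \<kappa> V by simp
  then obtain \<delta> where \<delta>: "\<delta> > 0"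
    "\<And>w. w \<in> diff_pts G \<Longrightarrow> dist w y < \<delta> \<Longrightarrow> - (\<kappa> / (4 * V) * dist w y) \<le> inner (w - y) g"
    using cst_diff_near_boundary[OF yc(2) lim xb Arg_mem[OF x']] ell by metis
  have "\<kappa> / (4 * (norm g + 1)) > 0" using \<kappa> by (simp add: add_nonneg_pos)
  then obtain \<rho> where \<rho>: "\<rho> > 0" "\<rho> < 1" "\<rho> < \<kappa> / (4 * (norm g + 1))"
    using field_lbound_gt_zero[of 1] by auto
  then have "\<rho> * (4 * (norm g + 1)) < \<kappa>" by (simp add: pos_less_divide_eq add_nonneg_pos)
  then have \<rho>g: "4 * (\<rho> * norm g) \<le> \<kappa>" using \<rho>(1) by (simp add: algebra_simps)
  have "\<delta> / V > 0" using \<delta>(1) V by simp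
  then obtain t where t: "t > 0" "t < 1" "t < \<delta> / V" using field_lbound_gt_zero[of 1] by auto
  define p where "p = y + t *\<^sub>R (z - y)"
  have "p \<in> open_segment z y"
    unfolding p_def in_segment using \<open>z \<noteq> y\<close> t
    by (intro conjI exI[of _ "1 - t"]) (auto simp: algebra_simps)
  then have "p \<in> interior (dom_phi G)"
    using in_interior_closure_convex_segment[OF convex_dom_phi z yc(1)] by blast
  then obtain w where w: "w \<in> diff_pts G" "dist w p < \<rho> * t" using diff_pts_dense \<rho> t by (meson mult_pos_pos)
  have wp: "norm (w - p) < \<rho> * t" using w(2) by (simp add: dist_norm)
  have "norm (w - y) \<le> norm (w - p) + norm (p - y)" using norm_triangle_ineq[of "w - p" "p - y"] by simp
  moreover have "norm (p - y) = t * norm (z - y)" unfolding p_def using t(1) by simp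
  moreover have "\<rho> * t \<le> 1 * t" using \<rho>(2) t(1) by (intro mult_right_mono) auto
  moreover have "t * V = t * norm (z - y) + t" unfolding V_def by (simp add: algebra_simps)
  ultimately have wy: "dist w y \<le> t * V" using wp by (simp add: dist_norm)
  moreover have "t * V < \<delta>" using t(3) V by (simp add: pos_less_divide_eq)
  ultimately have "- (\<kappa> / (4 * V) * dist w y) \<le> inner (w - y) g" using \<delta>(2)[OF w(1)] by simp
  moreover have "\<kappa> / (4 * V) * dist w y \<le> \<kappa> / (4 * V) * (t * V)"
    using wy \<kappa> V by (intro mult_left_mono) auto
  moreover have "\<kappa> / (4 * V) * (t * V) = t * \<kappa> / 4" using V by simp
  ultimately have lo: "- (t * \<kappa>) \<le> 4 * inner (w - y) g" by linarith
  have "inner (p - y) g = - t * \<kappa>" unfolding p_def \<kappa>_def by simp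
  moreover have "inner (w - p) g \<le> (\<rho> * t) * norm g"
    using Cauchy_Schwarz_ineq2[of "w - p" g] mult_right_mono[OF less_imp_le[OF wp], of "norm g"] by simp
  moreover have "4 * (t * (\<rho> * norm g)) \<le> t * \<kappa>" using mult_left_mono[OF \<rho>g, of t] t(1) by simp
  moreover have "inner (w - y) g = inner (p - y) g + inner (w - p) g" by (simp add: inner_diff_left)
  ultimately have "4 * inner (w - y) g \<le> - 3 * (t * \<kappa>)" by (simp add: algebra_simps)
  moreover have "t * \<kappa> > 0" using t(1) \<kappa> by simp
  ultimately show False using lo by linarith
qed


lemma boundary_grad_tendsto:
  assumes "y \<notin> diff_pts G"
    and "\<forall>ys. (\<forall>n. ys n \<in> diff_pts G) \<and> ys \<longlonglongrightarrow> y \<longrightarrow> (\<lambda>n. cgrad G (ys n)) \<longlonglongrightarrow> D"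
  shows "(cgrad G \<longlongrightarrow> D) (at y within diff_pts G)"
  unfolding tendsto_at_iff_sequentially o_def using assms by blast

lemma ordered_pair_cst_separation:
  assumes a: "a \<in> G" and b: "b \<in> G" and lt: "fst a < fst b" "snd a < snd b"
  shows "\<exists>w\<in>interior (dom_phi G). cst b w < cst a w" "\<exists>w\<in>interior (dom_phi G). cst a w < cst b w"
proof -
  define e where "e = min (fst b - fst a) (snd b - snd a) / 3"
  have "3 * e \<le> fst b - fst a" "3 * e \<le> snd b - snd a" "3 * e > 0" unfolding e_def using lt by auto
  then have e: "e > 0" "e < fst b - fst a - e" "e < snd b - snd a - e" by linarith+
  have sq: "e * e < (fst b - fst a - e) * (snd b - snd a - e)" using e by (intro mult_strict_mono) auto
  have "surrounds G (b - (e, e))" "surrounds G (a + (e, e))"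
    unfolding surrounds_def using a b e by (intro bexI[of _ a] bexI[of _ b]; simp)+
  then have "b - (e, e) \<in> interior (dom_phi G)" "a + (e, e) \<in> interior (dom_phi G)"
    using interior_dom_phi_iff by blast+
  moreover have "cst b (b - (e, e)) < cst a (b - (e, e))" "cst a (a + (e, e)) < cst b (a + (e, e))"
    using sq unfolding cst_def by (simp_all add: algebra_simps)
  ultimately show "\<exists>w\<in>interior (dom_phi G). cst b w < cst a w" "\<exists>w\<in>interior (dom_phi G). cst a w < cst b w"
    by blast+
qed

lemma mem_if_boundary_grad_non_unique:
  assumes y: "y \<in> closure (dom_phi G)" "y \<notin> diff_pts G"
    and lim: "(cgrad G \<longlongrightarrow> D) (at y within diff_pts G)"
    and xb: "cst_grad_inv y D \<in> Arg G y" and x': "x' \<in> Arg G y" and ne: "x' \<noteq> cst_grad_inv y D"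
  shows "y \<in> G"
proof -
  define b where "b = cst_grad_inv y D"
  have b: "b \<in> Arg G y" and bG: "b \<in> G" and x'G: "x' \<in> G"
    using xb x' Arg_mem unfolding b_def by auto
  have min: "\<not> cst x' w < cst b w" if "w \<in> interior (dom_phi G)" for w
    using cst_grad_inv_Arg_min_boundary[OF y lim xb x' that] unfolding b_def by simp
  have eq: "cst b y = cst x' y" using Arg_phir[OF b] Arg_phir[OF x'] by simp
  consider "fst b = fst x'" | "snd b = snd x'" | "fst b < fst x'" "snd b < snd x'" | "fst x' < fst b" "snd x' < snd b"
    using comparable[OF bG x'G] by fastforce
  then have zero: "cst b y = 0"
  proof cases
    case 1
    then have "snd b \<noteq> snd x'" using ne unfolding b_def by (auto simp: prod_eq_iff)
    moreover have "(fst b - fst y) * (snd b - snd x') = 0" using eq 1 unfolding cst_def by (simp add: algebra_simps)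
    ultimately show ?thesis unfolding cst_def by simp
  next
    case 2
    then have "fst b \<noteq> fst x'" using ne unfolding b_def by (auto simp: prod_eq_iff)
    moreover have "(snd b - snd y) * (fst b - fst x') = 0" using eq 2 unfolding cst_def by (simp add: algebra_simps)
    ultimately show ?thesis unfolding cst_def by simp
  next
    case 3
    then show ?thesis using ordered_pair_cst_separation(1)[OF bG x'G] min by blast
  next
    case 4
    then show ?thesis using ordered_pair_cst_separation(2)[OF x'G bG] min by blast
  qed
  have "0 \<le> cst x y" if "x \<in> G" for x
    using Arg_min[OF b that] zero cst_commute by simp
  then show ?thesis by (rule mem_if_cst_nonneg)
qed

lemma dom_grad_empty_if_interior_empty:
  "interior (dom_phi G) = {} \<Longrightarrow> dom_grad G = {}"
  using rel_frontier_empty_if_interior_empty unfolding dom_grad_def has_grad_def by blast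

lemma has_grad_Arg:
  assumes nd: "interior (dom_phi G) \<noteq> {}" and hg: "has_grad G y D"
  shows "cst_grad_inv y D \<in> Arg G y"
    and "x' \<in> Arg G y \<Longrightarrow> x' \<noteq> cst_grad_inv y D \<Longrightarrow> y \<in> rel_frontier (dom_phi G) \<inter> G"
proof -
  from hg consider (interior) "y \<in> interior (dom_phi G)" "GDERIV (phir G) y :> D"
    | (boundary) "y \<in> rel_frontier (dom_phi G)"
      "\<forall>ys. (\<forall>n. ys n \<in> diff_pts G) \<and> ys \<longlonglongrightarrow> y \<longrightarrow> (\<lambda>n. cgrad G (ys n)) \<longlonglongrightarrow> D"
    unfolding has_grad_def by blast
  then have "cst_grad_inv y D \<in> Arg G y
    \<and> (\<forall>x'\<in>Arg G y. x' \<noteq> cst_grad_inv y D \<longrightarrow> y \<in> rel_frontier (dom_phi G) \<inter> G)"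
  proof cases
    case interior
    then show ?thesis using Arg_eq_if_gderiv by blast
  next
    case boundary
    then have y: "y \<in> closure (dom_phi G)" "y \<notin> diff_pts G"
      using rel_frontier_dom_phi[OF nd] unfolding diff_pts_def by auto
    have lim: "(cgrad G \<longlongrightarrow> D) (at y within diff_pts G)"
      using boundary_grad_tendsto[OF y(2) boundary(2)] .
    have "y \<in> closure (interior (dom_phi G))" using y(1) convex_closure_interior[OF convex_dom_phi nd] by simp
    then have xb: "cst_grad_inv y D \<in> Arg G y" using cst_grad_inv_Arg_boundary y(2) lim by blast
    then show ?thesis using mem_if_boundary_grad_non_unique[OF y lim xb] boundary(1) by blast
  qed
  then show "cst_grad_inv y D \<in> Arg G y"
    and "x' \<in> Arg G y \<Longrightarrow> x' \<noteq> cst_grad_inv y D \<Longrightarrow> y \<in> rel_frontier (dom_phi G) \<inter> G" by blast+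
qed

lemma dom_grad_diff_udom_Arg: "dom_grad G - udom_Arg G \<subseteq> rel_frontier (dom_phi G) \<inter> G"
proof
  fix y assume y: "y \<in> dom_grad G - udom_Arg G"
  then obtain D where hg: "has_grad G y D" unfolding dom_grad_def by blast
  have nd: "interior (dom_phi G) \<noteq> {}" using y dom_grad_empty_if_interior_empty by blast
  have "Arg G y \<noteq> {cst_grad_inv y D}" using y unfolding udom_Arg_def by blast
  then obtain x' where "x' \<in> Arg G y" "x' \<noteq> cst_grad_inv y D" using has_grad_Arg(1)[OF nd hg] by blast
  then show "y \<in> rel_frontier (dom_phi G) \<inter> G" using has_grad_Arg(2)[OF nd hg] by blast
qed

lemma grad_eq_cst_grad:
  assumes y: "y \<in> dom_grad G" and A: "Arg G y = {x}"
  shows "grad G y = cst_grad x y"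
proof -
  have nd: "interior (dom_phi G) \<noteq> {}" using y dom_grad_empty_if_interior_empty by blast
  have "has_grad G y (grad G y)" using y unfolding dom_grad_def grad_def by (metis (mono_tags) mem_Collect_eq someI)
  then have "cst_grad_inv y (grad G y) = x" using has_grad_Arg(1)[OF nd] A by blast
  then show ?thesis by (metis cst_grad_cst_grad_inv)
qed

lemma rel_frontier_inter_E_set: "rel_frontier (dom_phi G) \<inter> G = rel_frontier (dom_phi G) \<inter> E_set G"
proof -
  have "y \<in> E_set G" if "y \<in> rel_frontier (dom_phi G)" "y \<in> G" for y
  proof (cases "interior (dom_phi G) = {}")
    case True
    then show ?thesis using that rel_frontier_empty_if_interior_empty by blast
  next
    case False
    then show ?thesis using that rel_frontier_dom_phi mem_E_set_if_not_interior by blast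
  qed
  then show ?thesis using mem_E_set_iff by blast
qed

lemma Dc_Arg_phi:
  assumes "y \<in> dom_grad G" "y \<in> udom_Arg G"
  shows "Arg G y = {Dc G y} \<and> phi G y = ereal (cst (Dc G y) y)
    \<and> phi G y = ereal (fst (grad G y) * snd (grad G y))"
proof -
  obtain x where A: "Arg G y = {x}" using assms(2) unfolding udom_Arg_def by blast
  have g: "grad G y = cst_grad x y" using grad_eq_cst_grad[OF assms(1) A] .
  then have "Dc G y = x" by (simp add: Dc_eq_cst_grad_inv)
  moreover have "phi G y = ereal (cst x y)" using A unfolding Arg_def by blast
  moreover have "fst (grad G y) * snd (grad G y) = cst x y"
    unfolding g cst_grad_eq cst_def by (simp add: algebra_simps)
  ultimately show ?thesis using A by simp
qed

end

section \<open>Unique minimizers without a gradient\<close>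

definition escapes_below :: "pt set \<Rightarrow> pt \<Rightarrow> bool" where
  "escapes_below G y \<longleftrightarrow> (\<forall>K \<delta>. \<delta> > 0 \<longrightarrow>
     (\<exists>w\<in>interior (dom_phi G). dist w y < \<delta> \<and> (\<exists>x\<in>Arg G w. fst x + snd x < - K)))"

definition escapes_above :: "pt set \<Rightarrow> pt \<Rightarrow> bool" where
  "escapes_above G y \<longleftrightarrow> (\<forall>K \<delta>. \<delta> > 0 \<longrightarrow>
     (\<exists>w\<in>interior (dom_phi G). dist w y < \<delta> \<and> (\<exists>x\<in>Arg G w. K < fst x + snd x)))"

context max_monotone
begin

lemma sum_unbounded_below: "\<exists>z\<in>G. fst z + snd z < m"
proof -
  obtain x0 where x0: "x0 \<in> G" using nonempty by blast
  show ?thesis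
  proof (cases "bdd_below (fst ` G)")
    case True
    then have "\<not> bdd_below (snd ` G)" using not_bdd_below_fst_snd by blast
    then obtain a where a: "a \<in> G" "snd a < min (snd x0) (m - fst x0)"
      using not_bdd_below_ex[of "snd ` G"] by fastforce
    then have "fst a \<le> fst x0" using comparable[OF a(1) x0] by auto
    then show ?thesis using a by (intro bexI[of _ a]) auto
  next
    case False
    then obtain a where a: "a \<in> G" "fst a < min (fst x0) (m - snd x0)"
      using not_bdd_below_ex[of "fst ` G"] by fastforce
    then have "snd a \<le> snd x0" using comparable[OF a(1) x0] by auto
    then show ?thesis using a by (intro bexI[of _ a]) auto
  qed
qed

lemma sum_unbounded_above: "\<exists>z\<in>G. m < fst z + snd z"
proof -
  interpret N: max_monotone "uminus ` G" by (rule image_max_monotone[OF cst_symmetry_uminus])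
  obtain z where "z \<in> uminus ` G" "fst z + snd z < - m" using N.sum_unbounded_below by blast
  then show ?thesis by (intro bexI[of _ "- z"]) auto
qed

lemma bounded_if_sum_bounded: "\<exists>R. \<forall>x\<in>G. \<bar>fst x + snd x\<bar> \<le> K \<longrightarrow> norm x \<le> R"
proof -
  obtain a where a: "a \<in> G" "fst a + snd a < - K" using sum_unbounded_below by blast
  obtain b where b: "b \<in> G" "K < fst b + snd b" using sum_unbounded_above by blast
  have "norm x \<le> \<bar>fst a\<bar> + \<bar>fst b\<bar> + \<bar>snd a\<bar> + \<bar>snd b\<bar>" if x: "x \<in> G" "\<bar>fst x + snd x\<bar> \<le> K" for x
  proof -
    have "fst a \<le> fst x \<and> snd a \<le> snd x" "fst x \<le> fst b \<and> snd x \<le> snd b"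
      using comparable[OF x(1) a(1)] comparable[OF x(1) b(1)] x(2) a(2) b(2) by auto
    then show ?thesis using norm_le_abs_fst_abs_snd[of x] by linarith
  qed
  then show ?thesis by blast
qed

lemma has_grad_if_Arg_bounded:
  assumes yf: "y \<in> rel_frontier (dom_phi G)" and A: "Arg G y = {x}" and d0: "d0 > 0"
    and bounded: "\<And>w. w \<in> diff_pts G \<Longrightarrow> dist w y < d0 \<Longrightarrow> norm (cst_grad_inv w (cgrad G w)) \<le> R"
  shows "has_grad G y (cst_grad x y)"
  unfolding has_grad_def
proof (intro disjI2 conjI yf allI impI)
  show "y \<in> dom_phi G" using A Arg_dom_phi by blast
  fix ys assume ys: "(\<forall>n. ys n \<in> diff_pts G) \<and> ys \<longlonglongrightarrow> y"
  show "(\<lambda>n. cgrad G (ys n)) \<longlonglongrightarrow> cst_grad x y"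
    unfolding lim_sequentially
  proof (intro allI impI)
    fix r :: real assume r: "r > 0"
    obtain d1 where d1: "d1 > 0"
      "\<forall>w x'. dist w y < d1 \<longrightarrow> x' \<in> Arg G w \<longrightarrow> norm x' \<le> R \<longrightarrow> norm (x' - x) < r/2"
      using Arg_stable[OF A, of "r/2" R] r by auto
    define d where "d = Min {d0, d1, r/2}"
    have d: "d > 0" "d \<le> d0" "d \<le> d1" "d \<le> r/2" unfolding d_def using d0 d1 r by auto
    obtain N where N: "\<And>n. n \<ge> N \<Longrightarrow> dist (ys n) y < d" using ys d(1) unfolding lim_sequentially by blast
    have "dist (cgrad G (ys n)) (cst_grad x y) < r" if "n \<ge> N" for n
    proof -
      define w where "w = ys n"
      define xw where "xw = cst_grad_inv w (cgrad G w)"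
      have w: "w \<in> diff_pts G" "dist w y < d" using ys N[OF that] unfolding w_def by auto
      have "xw \<in> Arg G w" unfolding xw_def using Arg_diff_pts[OF w(1)] by simp
      moreover have "norm xw \<le> R" unfolding xw_def using bounded w d by simp
      moreover have "dist w y < d1" using w(2) d by simp
      ultimately have "norm (xw - x) < r/2" using d1(2) by blast
      moreover have "norm (cst_grad xw w - cst_grad x y) \<le> norm (w - y) + norm (xw - x)"
        by (rule norm_cst_grad_diff)
      moreover have "norm (w - y) < r/2" using w(2) d by (simp add: dist_norm)
      ultimately show ?thesis unfolding w_def[symmetric] xw_def by (simp add: dist_norm)
    qed
    then show "\<exists>N. \<forall>n\<ge>N. dist (cgrad G (ys n)) (cst_grad x y) < r" by blast
  qed
qed

lemma escapes_if_no_grad: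
  assumes nd: "interior (dom_phi G) \<noteq> {}" and y: "y \<in> udom_Arg G - dom_grad G"
  shows "y \<in> rel_frontier (dom_phi G) \<and> (escapes_below G y \<or> escapes_above G y)"
proof -
  obtain x where A: "Arg G y = {x}" using y unfolding udom_Arg_def by blast
  have yd: "y \<in> dom_phi G" using A Arg_dom_phi by blast
  have "y \<notin> interior (dom_phi G)"
  proof
    assume "y \<in> interior (dom_phi G)"
    then have "has_grad G y (cst_grad x y)"
      unfolding has_grad_def using gderiv_phir_if_Arg_singleton[OF _ A] by blast
    then show False using y yd unfolding dom_grad_def by blast
  qed
  then have yf: "y \<in> rel_frontier (dom_phi G)"
    using rel_frontier_dom_phi[OF nd] yd closure_subset by blast
  have "escapes_below G y \<or> escapes_above G y"
  proof (rule ccontr)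
    assume "\<not> (escapes_below G y \<or> escapes_above G y)"
    then obtain K1 d1 K2 d2 where d12: "d1 > 0" "d2 > 0"
      and K1: "\<forall>w\<in>interior (dom_phi G). dist w y < d1 \<longrightarrow> (\<forall>x\<in>Arg G w. \<not> fst x + snd x < - K1)"
      and K2: "\<forall>w\<in>interior (dom_phi G). dist w y < d2 \<longrightarrow> (\<forall>x\<in>Arg G w. \<not> K2 < fst x + snd x)"
      unfolding escapes_below_def escapes_above_def by blast
    obtain R where R: "\<forall>x\<in>G. \<bar>fst x + snd x\<bar> \<le> max K1 K2 \<longrightarrow> norm x \<le> R"
      using bounded_if_sum_bounded by blast
    have "norm (cst_grad_inv w (cgrad G w)) \<le> R" if w: "w \<in> diff_pts G" "dist w y < min d1 d2" for w
    proof -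
      define xw where "xw = cst_grad_inv w (cgrad G w)"
      have xw: "xw \<in> Arg G w" unfolding xw_def using Arg_diff_pts[OF w(1)] by simp
      have "w \<in> interior (dom_phi G)" using w(1) unfolding diff_pts_def by blast
      then have "\<not> fst xw + snd xw < - K1" "\<not> K2 < fst xw + snd xw" using K1 K2 w(2) xw by auto
      then have "\<bar>fst xw + snd xw\<bar> \<le> max K1 K2" unfolding abs_le_iff max_def by auto
      then show ?thesis using R Arg_mem[OF xw] unfolding xw_def by blast
    qed
    then have "has_grad G y (cst_grad x y)"
      using d12 by (intro has_grad_if_Arg_bounded[OF yf A, of "min d1 d2" R]) auto
    then show False using y yd unfolding dom_grad_def by blast
  qed
  then show ?thesis using yf by blast
qed

lemma escapes_below_bdd_below:
  assumes esc: "escapes_below G y" and x: "x \<in> Arg G y"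
  shows "bdd_below (fst ` G) \<or> bdd_below (snd ` G)"
proof (rule ccontr)
  assume "\<not> ?thesis"
  then have nf: "\<not> bdd_below (fst ` G)" and ns: "\<not> bdd_below (snd ` G)" by auto
  define T where "T = \<bar>cst x y\<bar> + 3"
  obtain a where a: "a \<in> G" "fst a < fst y - T" using not_bdd_below_ex[OF nf, of "fst y - T"] by auto
  obtain b where b: "b \<in> G" "snd b < snd y - T" using not_bdd_below_ex[OF ns, of "snd y - T"] by auto
  obtain z where z: "z \<in> G" "fst z \<le> fst a" "snd z \<le> snd b" using common_lower_point[OF a(1) b(1)] by blast
  obtain \<delta> where \<delta>: "\<delta> > 0" "\<delta> \<le> 1" "\<And>w xw. dist w y < \<delta> \<Longrightarrow> xw \<in> Arg G w \<Longrightarrow> cst xw w < cst x y + 1"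
    using Arg_near_cst_bound[OF Arg_mem[OF x] zero_less_one, where y = y] by blast
  obtain w xw where w: "dist w y < \<delta>" and xw: "xw \<in> Arg G w" "fst xw + snd xw < fst z + snd z"
    using esc \<delta>(1) unfolding escapes_below_def by (metis minus_minus)
  have "fst xw \<le> fst z \<and> snd xw \<le> snd z" using comparable[OF Arg_mem[OF xw(1)] z(1)] xw(2) by auto
  moreover have "\<bar>fst w - fst y\<bar> < 1" "\<bar>snd w - snd y\<bar> < 1"
    using abs_fst_diff_le_dist[of w y] abs_snd_diff_le_dist[of w y] w \<delta>(2) by linarith+
  ultimately have "T - 1 \<le> fst w - fst xw" "T - 1 \<le> snd w - snd xw"
    using z a b unfolding abs_less_iff by linarith+
  moreover have "T - 1 \<ge> 1" unfolding T_def by simp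
  ultimately have "(T - 1) * (T - 1) \<le> (fst w - fst xw) * (snd w - snd xw)"
    by (intro mult_mono) auto
  moreover have "T - 1 \<le> (T - 1) * (T - 1)"
    using mult_left_mono[of 1 "T - 1" "T - 1"] \<open>T - 1 \<ge> 1\<close> by simp
  moreover have "cst xw w = (fst w - fst xw) * (snd w - snd xw)" unfolding cst_def by (simp add: algebra_simps)
  moreover have "cst xw w < cst x y + 1" using \<delta>(3)[OF w xw(1)] .
  moreover have "cst x y + 1 < T - 1" unfolding T_def using abs_ge_self[of "cst x y"] by linarith
  ultimately show False by linarith
qed

end

definition inf_snd :: "pt set \<Rightarrow> real \<Rightarrow> bool" where
  "inf_snd G b \<longleftrightarrow> (\<forall>x\<in>G. b \<le> snd x) \<and> (\<forall>e>0. \<exists>x\<in>G. snd x < b + e)"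

lemma inf_snd_le: "inf_snd G b \<Longrightarrow> x \<in> G \<Longrightarrow> b \<le> snd x"
  unfolding inf_snd_def by blast

lemma inf_snd_approx: "inf_snd G b \<Longrightarrow> e > 0 \<Longrightarrow> \<exists>x\<in>G. snd x < b + e"
  unfolding inf_snd_def by blast

lemma inf_snd_unique: assumes "inf_snd G b" "inf_snd G b'" shows "b = b'"
proof -
  have "\<not> b < b'" if l: "inf_snd G b" "inf_snd G b'" for b b'
  proof
    assume "b < b'"
    then obtain x where "x \<in> G" "snd x < b + (b' - b)" using inf_snd_approx[OF l(1), of "b' - b"] by auto
    then show False using inf_snd_le[OF l(2) \<open>x \<in> G\<close>] by simp
  qed
  then have "\<not> b < b'" "\<not> b' < b" using assms by blast+
  then show ?thesis by simp
qed

context max_monotone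
begin

lemma inf_snd_Inf: assumes "bdd_below (snd ` G)" shows "inf_snd G (Inf (snd ` G))"
  unfolding inf_snd_def
proof (intro conjI ballI allI impI)
  show "Inf (snd ` G) \<le> snd x" if "x \<in> G" for x using cInf_lower[OF imageI[OF that] assms] .
  fix e :: real assume "e > 0"
  have "snd ` G \<noteq> {}" using nonempty by blast
  moreover have "Inf (snd ` G) < Inf (snd ` G) + e" using \<open>e > 0\<close> by simp
  ultimately have "\<exists>v\<in>snd ` G. v < Inf (snd ` G) + e" using cInf_less_iff[OF _ assms] by blast
  then show "\<exists>x\<in>G. snd x < Inf (snd ` G) + e" by blast
qed

lemma inf_snd_not_bdd_below_fst: assumes "inf_snd G b" shows "\<not> bdd_below (fst ` G)"
proof -
  have "bdd_below (snd ` G)" unfolding bdd_below_def using inf_snd_le[OF assms] by blast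
  then show ?thesis using not_bdd_below_fst_snd by blast
qed

lemma inf_snd_le_dom_phi: assumes l: "inf_snd G b" and y: "y \<in> dom_phi G" shows "b \<le> snd y"
proof (rule ccontr)
  assume "\<not> b \<le> snd y"
  then have "b - snd y > 0" by simp
  then obtain a where "a \<in> G" "snd a < snd y + (b - snd y)" using dom_phi_approx(2)[OF y] by blast
  then show False using inf_snd_le[OF l \<open>a \<in> G\<close>] by simp
qed

lemma inf_snd_less_interior: assumes "inf_snd G b" "z \<in> interior (dom_phi G)" shows "b < snd z"
proof -
  obtain a where "a \<in> G" "snd a < snd z" using assms(2) interior_dom_phi_iff surrounds_iff by blast
  then show ?thesis using inf_snd_le[OF assms(1) \<open>a \<in> G\<close>] by linarith
qed

lemma escapes_below_on_inf_snd:
  assumes l: "inf_snd G b" and esc: "escapes_below G y" and x: "x \<in> Arg G y"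
  shows "snd y = b"
proof (rule ccontr)
  assume "snd y \<noteq> b"
  moreover have "b \<le> snd y" using inf_snd_le_dom_phi[OF l Arg_dom_phi[OF x]] .
  ultimately have "snd y - b > 0" by simp
  define e where "e = (snd y - b) / 3"
  have e: "e > 0" "snd y = b + 3 * e" unfolding e_def using \<open>snd y - b > 0\<close> by (simp_all add: field_simps)
  define T where "T = 1 + (\<bar>cst x y\<bar> + 1) / e"
  have T: "(T - 1) * e = \<bar>cst x y\<bar> + 1" "T - 1 > 0"
    unfolding T_def using e(1) by (simp_all add: add_pos_nonneg)
  obtain a1 where a1: "a1 \<in> G" "snd a1 < b + e" using inf_snd_approx[OF l e(1)] by auto
  obtain a2 where a2: "a2 \<in> G" "fst a2 < fst y - T"
    using not_bdd_below_ex[OF inf_snd_not_bdd_below_fst[OF l], of "fst y - T"] by auto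
  obtain z where z: "z \<in> G" "fst z \<le> fst a1" "snd z \<le> snd a1" "fst z \<le> fst a2" "snd z \<le> snd a2"
    using common_lower_point[OF a1(1) a2(1)] by blast
  obtain \<delta> where \<delta>: "\<delta> > 0" "\<delta> \<le> 1" "\<And>w xw. dist w y < \<delta> \<Longrightarrow> xw \<in> Arg G w \<Longrightarrow> cst xw w < cst x y + 1"
    using Arg_near_cst_bound[OF Arg_mem[OF x] zero_less_one, where y = y] by blast
  have "min \<delta> e > 0" using \<delta> e by simp
  then obtain w xw where w: "dist w y < min \<delta> e" and xw: "xw \<in> Arg G w" "fst xw + snd xw < fst z + snd z"
    using esc unfolding escapes_below_def by (metis minus_minus)
  have "fst xw \<le> fst z \<and> snd xw \<le> snd z" using comparable[OF Arg_mem[OF xw(1)] z(1)] xw(2) by auto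
  moreover have "\<bar>fst w - fst y\<bar> < 1" "\<bar>snd w - snd y\<bar> < e"
    using abs_fst_diff_le_dist[of w y] abs_snd_diff_le_dist[of w y] w \<delta>(2) by auto
  ultimately have "T - 1 \<le> fst w - fst xw" "e \<le> snd w - snd xw"
    using z a1 a2 e(2) unfolding abs_less_iff by linarith+
  then have "(T - 1) * e \<le> (fst w - fst xw) * (snd w - snd xw)"
    using T(2) e(1) by (intro mult_mono) auto
  moreover have "cst xw w = (fst w - fst xw) * (snd w - snd xw)" unfolding cst_def by (simp add: algebra_simps)
  moreover have "cst xw w < cst x y + 1" using \<delta>(3) w xw(1) by simp
  ultimately show False using T(1) abs_ge_self[of "cst x y"] by linarith
qed

lemma Arg_singleton_above_inf_snd:
  assumes l: "inf_snd G b" and A: "Arg G y = {x}" and sy: "snd y = b"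
  shows "b < snd x"
proof (rule ccontr)
  have xA: "x \<in> Arg G y" using A by auto
  assume "\<not> b < snd x"
  then have sx: "snd x = b" using inf_snd_le[OF l Arg_mem[OF xA]] by simp
  obtain z where z: "z \<in> G" "fst z < fst x"
    using not_bdd_below_ex[OF inf_snd_not_bdd_below_fst[OF l], of "fst x"] by auto
  have "snd z \<le> snd x" using comparable[OF z(1) Arg_mem[OF xA]] z(2) by auto
  then have "cst z y = cst x y" unfolding cst_def using inf_snd_le[OF l z(1)] sx sy by simp
  then have "z \<in> Arg G y" using z(1) xA unfolding Arg_iff by simp
  then show False using A z(2) by auto
qed

text \<open>Moving right along the line lowers \<open>cst x\<close> by \<open>gap\<close>, whereas escaping minimizers near \<open>y'\<close>
  lie almost on the line far to the left and so cannot compete with \<open>x\<close> at \<open>y\<close>.\<close>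

lemma escapes_below_inf_snd_left:
  assumes l: "inf_snd G b" and A: "Arg G y = {x}" and sy: "snd y = b" and sy': "snd y' = b"
    and esc: "escapes_below G y'"
  shows "fst y' \<le> fst y"
proof (rule ccontr)
  assume "\<not> fst y' \<le> fst y"
  define Q where "Q = fst y' - fst y"
  have Q: "Q > 0" unfolding Q_def using \<open>\<not> fst y' \<le> fst y\<close> by simp
  have xA: "x \<in> Arg G y" using A by auto
  define gap where "gap = Q * (snd x - b)"
  have gap: "gap > 0" unfolding gap_def using Q Arg_singleton_above_inf_snd[OF l A sy] by simp
  have cxy': "cst x y' = cst x y - gap" unfolding cst_def gap_def Q_def using sy sy' by (simp add: algebra_simps)
  obtain \<delta> where \<delta>: "\<delta> > 0" "\<delta> \<le> 1"
    "\<And>w xw. dist w y' < \<delta> \<Longrightarrow> xw \<in> Arg G w \<Longrightarrow> cst xw w < cst x y' + gap / 3"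
    using Arg_near_cst_bound[OF Arg_mem[OF xA] divide_pos_pos[OF gap zero_less_numeral], where y = y'] by blast
  define \<tau> where "\<tau> = min \<delta> (gap / (3 * (Q + 1)))"
  have \<tau>: "\<tau> > 0" "\<tau> \<le> 1" "\<tau> \<le> \<delta>" "(Q + 1) * \<tau> \<le> gap / 3"
  proof -
    show "\<tau> > 0" "\<tau> \<le> 1" "\<tau> \<le> \<delta>" unfolding \<tau>_def using \<delta> gap Q by auto
    have "(Q + 1) * \<tau> \<le> (Q + 1) * (gap / (3 * (Q + 1)))" unfolding \<tau>_def using Q by (intro mult_left_mono) auto
    also have "\<dots> = gap / 3" using Q by (simp add: field_simps)
    finally show "(Q + 1) * \<tau> \<le> gap / 3" .
  qed
  obtain a1 where a1: "a1 \<in> G" "snd a1 < b + \<tau>" using inf_snd_approx[OF l \<tau>(1)] by auto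
  obtain a2 where a2: "a2 \<in> G" "fst a2 < fst y - 2"
    using not_bdd_below_ex[OF inf_snd_not_bdd_below_fst[OF l], of "fst y - 2"] by auto
  obtain z where z: "z \<in> G" "fst z \<le> fst a1" "snd z \<le> snd a1" "fst z \<le> fst a2" "snd z \<le> snd a2"
    using common_lower_point[OF a1(1) a2(1)] by blast
  obtain w xw where w: "w \<in> interior (dom_phi G)" "dist w y' < \<tau>"
    and xw: "xw \<in> Arg G w" "fst xw + snd xw < fst z + snd z"
    using esc \<tau>(1) unfolding escapes_below_def by (metis minus_minus)
  have xwG: "xw \<in> G" using Arg_mem[OF xw(1)] .
  have "fst xw \<le> fst z \<and> snd xw \<le> snd z" using comparable[OF xwG z(1)] xw(2) by auto
  moreover have w1: "\<bar>fst w - fst y'\<bar> < \<tau>" using abs_fst_diff_le_dist[of w y'] w(2) by simp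
  ultimately have f: "fst xw - fst w \<le> 0" "snd xw - b < \<tau>"
    using z a1 a2 \<tau>(2) Q unfolding Q_def abs_less_iff by linarith+
  have s: "b < snd w" "b \<le> snd xw" using inf_snd_less_interior[OF l w(1)] inf_snd_le[OF l xwG] by auto
  have c1: "(fst xw - fst w) * (snd xw - b) \<le> cst xw w"
    unfolding cst_def using mult_left_mono_neg[of "snd xw - snd w" "snd xw - b" "fst xw - fst w"] f(1) s(1)
    by simp
  have c2: "cst xw y = (fst xw - fst w) * (snd xw - b) + (fst w - fst y) * (snd xw - b)"
    unfolding cst_def using sy by (simp add: algebra_simps)
  have "\<bar>fst w - fst y\<bar> \<le> Q + 1" using w1 \<tau>(2) Q unfolding Q_def abs_less_iff abs_le_iff by linarith
  then have "\<bar>(fst w - fst y) * (snd xw - b)\<bar> \<le> (Q + 1) * \<tau>"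
    unfolding abs_mult using s f by (intro mult_mono) auto
  then have c3: "(fst w - fst y) * (snd xw - b) \<le> gap / 3" using \<tau>(4) by simp
  have "cst xw w < cst x y' + gap / 3" using \<delta>(3)[OF _ xw(1)] w(2) \<tau>(3) by simp
  moreover have "cst x y \<le> cst xw y" using Arg_min[OF xA xwG] .
  ultimately show False using c1 c2 c3 cxy' gap by linarith
qed

lemma infinite_inf_snd_line:
  assumes nd: "interior (dom_phi G) \<noteq> {}" and l: "inf_snd G b" and yd: "y \<in> dom_phi G" and sy: "snd y = b"
  shows "infinite ({p. snd p = b} \<inter> rel_frontier (dom_phi G))"
proof -
  define f where "f n = (fst y - real n, b)" for n :: nat
  have "f n \<in> {p. snd p = b} \<inter> rel_frontier (dom_phi G)" for n
  proof -
    have "phir G y \<le> cst x (f n)" if x: "x \<in> G" for x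
    proof -
      have "0 \<le> snd x - b" using inf_snd_le[OF l x] by simp
      then have "(fst x - fst y) * (snd x - b) \<le> (fst x - fst y + real n) * (snd x - b)"
        by (intro mult_right_mono) auto
      then have "cst x y \<le> cst x (f n)" unfolding cst_def f_def using sy by (simp add: algebra_simps)
      then show ?thesis using phir_le[OF yd x] by linarith
    qed
    then have "f n \<in> dom_phi G" by (rule dom_phiI(1))
    moreover have "f n \<notin> interior (dom_phi G)" using inf_snd_less_interior[OF l] unfolding f_def by fastforce
    ultimately show ?thesis using rel_frontier_dom_phi[OF nd] closure_subset unfolding f_def by auto
  qed
  then have "range f \<subseteq> {p. snd p = b} \<inter> rel_frontier (dom_phi G)" by blast
  moreover have "inj f" unfolding f_def by (rule injI) simp
  then have "infinite (range f)" by (rule range_inj_infinite)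
  ultimately show ?thesis using infinite_super by blast
qed

end
lemma escape_image:
  assumes T: "cst_symmetry T" and PQ: "\<And>x. P (T x) \<longleftrightarrow> Q x"
  shows "(\<exists>w\<in>interior (dom_phi (T ` G)). dist w (T y) < \<delta> \<and> (\<exists>x\<in>Arg (T ` G) w. P x))
    \<longleftrightarrow> (\<exists>w\<in>interior (dom_phi G). dist w y < \<delta> \<and> (\<exists>x\<in>Arg G w. Q x))"
proof
  assume "\<exists>w\<in>interior (dom_phi (T ` G)). dist w (T y) < \<delta> \<and> (\<exists>x\<in>Arg (T ` G) w. P x)"
  then obtain w x where w: "w \<in> T ` interior (dom_phi G)" "dist w (T y) < \<delta>"
    and x: "x \<in> Arg (T ` G) w" "P x"
    unfolding dom_phi_image[OF T] interior_image[OF T] by blast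
  then obtain w0 where w0: "w0 \<in> interior (dom_phi G)" "w = T w0" by blast
  then obtain x0 where "x0 \<in> Arg G w0" "x = T x0" using x(1) Arg_image[OF T] by blast
  then show "\<exists>w\<in>interior (dom_phi G). dist w y < \<delta> \<and> (\<exists>x\<in>Arg G w. Q x)"
    using w0 w(2) x(2) PQ T by auto
next
  assume "\<exists>w\<in>interior (dom_phi G). dist w y < \<delta> \<and> (\<exists>x\<in>Arg G w. Q x)"
  then obtain w x where "w \<in> interior (dom_phi G)" "dist w y < \<delta>" "x \<in> Arg G w" "Q x" by blast
  then show "\<exists>w\<in>interior (dom_phi (T ` G)). dist w (T y) < \<delta> \<and> (\<exists>x\<in>Arg (T ` G) w. P x)"
    using PQ T unfolding dom_phi_image[OF T] interior_image[OF T]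
    by (intro bexI[of _ "T w"]) (auto simp: Arg_image)
qed

lemma escapes_below_swap: "escapes_below (prod.swap ` G) (prod.swap y) \<longleftrightarrow> escapes_below G y"
proof -
  have "(\<exists>w\<in>interior (dom_phi (prod.swap ` G)). dist w (prod.swap y) < \<delta> \<and>
      (\<exists>x\<in>Arg (prod.swap ` G) w. fst x + snd x < - K))
    \<longleftrightarrow> (\<exists>w\<in>interior (dom_phi G). dist w y < \<delta> \<and> (\<exists>x\<in>Arg G w. fst x + snd x < - K))" for K \<delta>
    by (rule escape_image[OF cst_symmetry_swap]) (simp add: add.commute)
  then show ?thesis unfolding escapes_below_def by simp
qed

lemma escapes_below_uminus: "escapes_below (uminus ` G) (- y) \<longleftrightarrow> escapes_above G y"
proof -
  have "(\<exists>w\<in>interior (dom_phi (uminus ` G)). dist w (- y) < \<delta> \<and>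
      (\<exists>x\<in>Arg (uminus ` G) w. fst x + snd x < - K))
    \<longleftrightarrow> (\<exists>w\<in>interior (dom_phi G). dist w y < \<delta> \<and> (\<exists>x\<in>Arg G w. K < fst x + snd x))" for K \<delta>
    by (rule escape_image[OF cst_symmetry_uminus]) auto
  then show ?thesis unfolding escapes_below_def escapes_above_def by simp
qed

text \<open>The horizontal line at the infimum of the second coordinates of \<open>G\<close> together with the
  vertical line at the infimum of the first ones; \<open>upper_lines\<close> does the same for the suprema.\<close>

definition lower_lines :: "pt set \<Rightarrow> pt set" where
  "lower_lines G = {p. inf_snd G (snd p)} \<union> {p. inf_snd (prod.swap ` G) (fst p)}"

definition upper_lines :: "pt set \<Rightarrow> pt set" where
  "upper_lines G = {p. inf_snd (uminus ` G) (- snd p)} \<union> {p. inf_snd (prod.swap ` uminus ` G) (- fst p)}"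

lemma subsingleton_finite_card:
  assumes "\<forall>a\<in>S. \<forall>b\<in>S. a = b" shows "finite S" "card S \<le> 1"
proof -
  have "S = {} \<or> (\<exists>a. S = {a})" using assms by blast
  then show "finite S" "card S \<le> 1" by auto
qed

lemma subset_two_subsingletons:
  assumes S: "S \<subseteq> A \<union> B"
    and A: "\<forall>a\<in>A. \<forall>b\<in>A. a = b" and B: "\<forall>a\<in>B. \<forall>b\<in>B. a = b"
  shows "finite S" "card S \<le> 2" "y \<in> S \<Longrightarrow> y' \<in> S \<Longrightarrow> y \<noteq> y' \<Longrightarrow> y \<in> A \<and> y' \<in> B \<or> y \<in> B \<and> y' \<in> A"
proof -
  have "finite A" "card A \<le> 1" "finite B" "card B \<le> 1"
    using subsingleton_finite_card[OF A] subsingleton_finite_card[OF B] by blast+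
  then show "finite S" using S finite_subset by blast
  have "card S \<le> card (A \<union> B)" using S \<open>finite A\<close> \<open>finite B\<close> by (simp add: card_mono)
  then show "card S \<le> 2" using card_Un_le[of A B] \<open>card A \<le> 1\<close> \<open>card B \<le> 1\<close> by linarith
  show "y \<in> S \<Longrightarrow> y' \<in> S \<Longrightarrow> y \<noteq> y' \<Longrightarrow> y \<in> A \<and> y' \<in> B \<or> y \<in> B \<and> y' \<in> A"
    using S A B by blast
qed

context max_monotone
begin

lemma escapes_below_inf_snd_line:
  assumes nd: "interior (dom_phi G) \<noteq> {}" and bdd: "bdd_below (snd ` G)"
    and esc: "escapes_below G y" and x: "x \<in> Arg G y"
  shows "inf_snd G (snd y)" "infinite ({p. snd p = snd y} \<inter> rel_frontier (dom_phi G))"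
proof -
  have l: "inf_snd G (Inf (snd ` G))" by (rule inf_snd_Inf[OF bdd])
  moreover have "snd y = Inf (snd ` G)" by (rule escapes_below_on_inf_snd[OF l esc x])
  ultimately show "inf_snd G (snd y)" "infinite ({p. snd p = snd y} \<inter> rel_frontier (dom_phi G))"
    using infinite_inf_snd_line[OF nd l Arg_dom_phi[OF x]] by simp_all
qed

lemma escapes_below_linear_part:
  assumes nd: "interior (dom_phi G) \<noteq> {}" and yf: "y \<in> rel_frontier (dom_phi G)"
    and esc: "escapes_below G y" and x: "x \<in> Arg G y"
  shows "\<exists>P\<in>linear_parts G. y \<in> P \<and> P \<subseteq> lower_lines G"
  using escapes_below_bdd_below[OF esc x]
proof
  assume "bdd_below (fst ` G)"
  interpret S: max_monotone "prod.swap ` G" by (rule image_max_monotone[OF cst_symmetry_swap])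
  have swap: "cst_symmetry prod.swap" by (rule cst_symmetry_swap)
  have "bdd_below (snd ` prod.swap ` G)" using \<open>bdd_below (fst ` G)\<close> by (simp add: image_image)
  moreover have "interior (dom_phi (prod.swap ` G)) \<noteq> {}"
    using nd unfolding dom_phi_image[OF swap] interior_image[OF swap] by blast
  moreover have "escapes_below (prod.swap ` G) (prod.swap y)" using esc escapes_below_swap by blast
  moreover have "prod.swap x \<in> Arg (prod.swap ` G) (prod.swap y)" using x Arg_image[OF swap] by simp
  ultimately have l: "inf_snd (prod.swap ` G) (fst y)"
    and inf: "infinite ({p. snd p = fst y} \<inter> rel_frontier (dom_phi (prod.swap ` G)))"
    using S.escapes_below_inf_snd_line[of "prod.swap y" "prod.swap x"] by simp_all
  define P where "P = {p. fst p = fst y} \<inter> rel_frontier (dom_phi G)"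
  have "{p. snd p = fst y} \<inter> rel_frontier (dom_phi (prod.swap ` G)) = prod.swap ` P"
    unfolding P_def dom_phi_image[OF swap] rel_frontier_image[OF swap]
    by (rule set_eqI) (simp add: cst_symmetry_mem_image_iff[OF swap])
  then have "infinite P" using inf finite_imageI by metis
  then have "P \<in> linear_parts G"
    unfolding linear_parts_def mem_Collect_eq P_def by (intro exI[of _ "fst y"]) simp
  moreover have "P \<subseteq> lower_lines G" using l unfolding P_def lower_lines_def by auto
  moreover have "y \<in> P" using yf unfolding P_def by simp
  ultimately show ?thesis by blast
next
  assume "bdd_below (snd ` G)"
  define P where "P = {p. snd p = snd y} \<inter> rel_frontier (dom_phi G)"
  have l: "inf_snd G (snd y)" and "infinite P"
    using escapes_below_inf_snd_line[OF nd \<open>bdd_below (snd ` G)\<close> esc x] unfolding P_def by auto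
  then have "P \<in> linear_parts G"
    unfolding linear_parts_def mem_Collect_eq P_def by (intro exI[of _ "snd y"]) simp
  moreover have "P \<subseteq> lower_lines G" using l unfolding P_def lower_lines_def by auto
  moreover have "y \<in> P" using yf unfolding P_def by simp
  ultimately show ?thesis by blast
qed

lemma escapes_below_unique:
  assumes esc: "escapes_below G y" "escapes_below G y'" and A: "Arg G y = {x}" "Arg G y' = {x'}"
  shows "y = y'"
proof -
  have unique_snd: "y = y'"
    if "bdd_below (snd ` H)" "max_monotone H" "escapes_below H y" "escapes_below H y'"
      "Arg H y = {x}" "Arg H y' = {x'}" for H y y' x x'
  proof -
    interpret H: max_monotone H by (rule that(2))
    have l: "inf_snd H (Inf (snd ` H))" by (rule H.inf_snd_Inf[OF that(1)])
    have "snd y = Inf (snd ` H)" "snd y' = Inf (snd ` H)"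
      using H.escapes_below_on_inf_snd[OF l] that(3-6) by auto
    then show ?thesis using H.escapes_below_inf_snd_left[OF l] that(3-6) by (simp add: prod_eq_iff eq_iff)
  qed
  have "x \<in> Arg G y" using A(1) by blast
  from escapes_below_bdd_below[OF esc(1) this] show ?thesis
  proof
    assume "bdd_below (fst ` G)"
    then have "bdd_below (snd ` prod.swap ` G)" by (simp add: image_image)
    moreover have "max_monotone (prod.swap ` G)" by (rule image_max_monotone[OF cst_symmetry_swap])
    ultimately have "prod.swap y = prod.swap y'"
      using unique_snd esc A escapes_below_swap Arg_image_eq_singleton[OF cst_symmetry_swap] by blast
    then show ?thesis by (metis swap_swap)
  qed (use unique_snd[OF _ max_monotone_axioms esc A] in blast)+
qed

lemma escapes_above_linear_part:
  assumes nd: "interior (dom_phi G) \<noteq> {}" and yf: "y \<in> rel_frontier (dom_phi G)"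
    and esc: "escapes_above G y" and x: "x \<in> Arg G y"
  shows "\<exists>Q\<in>linear_parts G. y \<in> Q \<and> Q \<subseteq> upper_lines G"
proof -
  have neg: "cst_symmetry uminus" by (rule cst_symmetry_uminus)
  interpret N: max_monotone "uminus ` G" by (rule image_max_monotone[OF neg])
  have fr: "rel_frontier (dom_phi (uminus ` G)) = uminus ` rel_frontier (dom_phi G)"
    unfolding dom_phi_image[OF neg] rel_frontier_image[OF neg] ..
  have "interior (dom_phi (uminus ` G)) \<noteq> {}"
    using nd unfolding dom_phi_image[OF neg] interior_image[OF neg] by blast
  moreover have "- y \<in> rel_frontier (dom_phi (uminus ` G))" unfolding fr using yf by simp
  moreover have "escapes_below (uminus ` G) (- y)" using esc escapes_below_uminus by blast
  moreover have "- x \<in> Arg (uminus ` G) (- y)" using x Arg_image[OF neg] by simp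
  ultimately obtain P where P: "P \<in> linear_parts (uminus ` G)" "- y \<in> P" "P \<subseteq> lower_lines (uminus ` G)"
    using N.escapes_below_linear_part by blast
  obtain t where t: "P = {p. snd p = t} \<inter> uminus ` rel_frontier (dom_phi G)
      \<or> P = {p. fst p = t} \<inter> uminus ` rel_frontier (dom_phi G)" "infinite P"
    using P(1) unfolding linear_parts_def fr by blast
  define Q where "Q = uminus ` P"
  have "Q = {p. snd p = - t} \<inter> rel_frontier (dom_phi G) \<or> Q = {p. fst p = - t} \<inter> rel_frontier (dom_phi G)"
    using t(1) unfolding Q_def
    by (elim disjE; intro disjI1 disjI2 set_eqI) (auto simp: cst_symmetry_mem_image_iff[OF neg])
  moreover have "infinite Q" using t(2) finite_imageI[of Q uminus] unfolding Q_def image_image by auto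
  ultimately have "Q \<in> linear_parts G" unfolding linear_parts_def by blast
  moreover have "y \<in> Q" using P(2) unfolding Q_def by (simp add: cst_symmetry_mem_image_iff[OF neg])
  moreover have "Q \<subseteq> upper_lines G"
    using P(3) unfolding Q_def lower_lines_def upper_lines_def by (auto simp: cst_symmetry_mem_image_iff[OF neg])
  ultimately show ?thesis by blast
qed

lemma escapes_above_unique:
  assumes "escapes_above G y" "escapes_above G y'" "Arg G y = {x}" "Arg G y' = {x'}"
  shows "y = y'"
proof -
  interpret N: max_monotone "uminus ` G" by (rule image_max_monotone[OF cst_symmetry_uminus])
  have "- y = - y'"
    using N.escapes_below_unique assms escapes_below_uminus
      Arg_image_eq_singleton[OF cst_symmetry_uminus] by blast
  then show ?thesis by simp
qed

lemma finite_lower_upper_lines: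
  assumes nd: "interior (dom_phi G) \<noteq> {}"
  shows "finite (lower_lines G \<inter> upper_lines G)"
proof -
  have neg: "cst_symmetry uminus" and swap: "cst_symmetry prod.swap"
    by (rule cst_symmetry_uminus cst_symmetry_swap)+
  interpret N: max_monotone "uminus ` G" by (rule image_max_monotone[OF neg])
  interpret S: max_monotone "prod.swap ` G" by (rule image_max_monotone[OF swap])
  interpret NS: max_monotone "prod.swap ` uminus ` G" by (rule N.image_max_monotone[OF swap])
  obtain z where z: "z \<in> interior (dom_phi G)" using nd by blast
  have "- z \<in> interior (dom_phi (uminus ` G))" "prod.swap z \<in> interior (dom_phi (prod.swap ` G))"
    "prod.swap (- z) \<in> interior (dom_phi (prod.swap ` uminus ` G))"
    using z by (simp_all add: dom_phi_image interior_image neg swap)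
  then have no_snd: "\<not> (inf_snd G b \<and> inf_snd (uminus ` G) (- b))"
    and no_fst: "\<not> (inf_snd (prod.swap ` G) a \<and> inf_snd (prod.swap ` uminus ` G) (- a))" for a b
  proof -
    show "\<not> (inf_snd G b \<and> inf_snd (uminus ` G) (- b))"
      using inf_snd_less_interior[OF _ z, of b] N.inf_snd_less_interior[OF _ \<open>- z \<in> _\<close>, of "- b"] by auto
    show "\<not> (inf_snd (prod.swap ` G) a \<and> inf_snd (prod.swap ` uminus ` G) (- a))"
      using S.inf_snd_less_interior[OF _ \<open>prod.swap z \<in> _\<close>, of a]
        NS.inf_snd_less_interior[OF _ \<open>prod.swap (- z) \<in> _\<close>, of "- a"] by auto
  qed
  define S3 where "S3 = {p. inf_snd G (snd p) \<and> inf_snd (prod.swap ` uminus ` G) (- fst p)}"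
  define S4 where "S4 = {p. inf_snd (prod.swap ` G) (fst p) \<and> inf_snd (uminus ` G) (- snd p)}"
  have "\<forall>p\<in>S3. \<forall>q\<in>S3. p = q"
  proof (intro ballI)
    fix p q assume "p \<in> S3" "q \<in> S3"
    then have "snd p = snd q" "- fst p = - fst q" using inf_snd_unique unfolding S3_def by blast+
    then show "p = q" by (simp add: prod_eq_iff)
  qed
  moreover have "\<forall>p\<in>S4. \<forall>q\<in>S4. p = q"
  proof (intro ballI)
    fix p q assume "p \<in> S4" "q \<in> S4"
    then have "fst p = fst q" "- snd p = - snd q" using inf_snd_unique unfolding S4_def by blast+
    then show "p = q" by (simp add: prod_eq_iff)
  qed
  ultimately have "finite S3" "finite S4" by (simp_all add: subsingleton_finite_card(1))
  moreover have "lower_lines G \<inter> upper_lines G \<subseteq> S3 \<union> S4"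
    using no_snd no_fst unfolding lower_lines_def upper_lines_def S3_def S4_def by blast
  ultimately show ?thesis using finite_subset by blast
qed


lemma linear_parts_distinct:
  assumes nd: "interior (dom_phi G) \<noteq> {}" and P: "P \<in> linear_parts G" "P \<subseteq> lower_lines G"
    and Q: "Q \<subseteq> upper_lines G"
  shows "P \<noteq> Q"
proof
  assume "P = Q"
  then have "P \<subseteq> lower_lines G \<inter> upper_lines G" using P Q by blast
  then have "finite P" using finite_lower_upper_lines[OF nd] finite_subset by blast
  then show False using P(1) unfolding linear_parts_def by blast
qed

lemma escapes_unique_udom_Arg:
  assumes "y \<in> udom_Arg G" "y' \<in> udom_Arg G"
  shows "escapes_below G y \<Longrightarrow> escapes_below G y' \<Longrightarrow> y = y'"
    and "escapes_above G y \<Longrightarrow> escapes_above G y' \<Longrightarrow> y = y'"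
proof -
  obtain x x' where "Arg G y = {x}" "Arg G y' = {x'}" using assms unfolding udom_Arg_def by blast
  then show "escapes_below G y \<Longrightarrow> escapes_below G y' \<Longrightarrow> y = y'"
    and "escapes_above G y \<Longrightarrow> escapes_above G y' \<Longrightarrow> y = y'"
    using escapes_below_unique escapes_above_unique by blast+
qed

lemma linear_part_no_grad:
  assumes nd: "interior (dom_phi G) \<noteq> {}" and y: "y \<in> udom_Arg G - dom_grad G"
  shows "escapes_below G y \<and> (\<exists>P\<in>linear_parts G. y \<in> P \<and> P \<subseteq> lower_lines G)
    \<or> escapes_above G y \<and> (\<exists>P\<in>linear_parts G. y \<in> P \<and> P \<subseteq> upper_lines G)"
proof -
  obtain x where "x \<in> Arg G y" using y unfolding udom_Arg_def by blast
  then show ?thesis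
    using escapes_if_no_grad[OF nd y] escapes_below_linear_part[OF nd] escapes_above_linear_part[OF nd] by blast
qed

lemma udom_Arg_diff_dom_grad:
  defines "S \<equiv> udom_Arg G - dom_grad G"
  shows "finite S \<and> card S \<le> 2 \<and> (\<forall>y\<in>S. \<exists>P\<in>linear_parts G. y \<in> P)
    \<and> (\<forall>y\<in>S. \<forall>y'\<in>S. y \<noteq> y' \<longrightarrow> (\<exists>P\<in>linear_parts G. \<exists>Q\<in>linear_parts G. P \<noteq> Q \<and> y \<in> P \<and> y' \<in> Q))"
proof (cases "interior (dom_phi G) = {}")
  case True
  then show ?thesis unfolding S_def using udom_Arg_empty_if_interior_empty by simp
next
  case False
  define Lw where "Lw = {y \<in> S. escapes_below G y \<and> (\<exists>P\<in>linear_parts G. y \<in> P \<and> P \<subseteq> lower_lines G)}"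
  define Up where "Up = {y \<in> S. escapes_above G y \<and> (\<exists>P\<in>linear_parts G. y \<in> P \<and> P \<subseteq> upper_lines G)}"
  have SLU: "S \<subseteq> Lw \<union> Up" unfolding Lw_def Up_def S_def using linear_part_no_grad[OF False] by blast
  have Lw1: "\<forall>a\<in>Lw. \<forall>b\<in>Lw. a = b"
  proof (intro ballI)
    fix a b assume "a \<in> Lw" "b \<in> Lw"
    then show "a = b" using escapes_unique_udom_Arg(1)[of a b] unfolding Lw_def S_def by simp
  qed
  have Up1: "\<forall>a\<in>Up. \<forall>b\<in>Up. a = b"
  proof (intro ballI)
    fix a b assume "a \<in> Up" "b \<in> Up"
    then show "a = b" using escapes_unique_udom_Arg(2)[of a b] unfolding Up_def S_def by simp
  qed
  note two = subset_two_subsingletons[OF SLU Lw1 Up1]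
  have "\<exists>P\<in>linear_parts G. \<exists>Q\<in>linear_parts G. P \<noteq> Q \<and> y \<in> P \<and> y' \<in> Q"
    if "y \<in> S" "y' \<in> S" "y \<noteq> y'" for y y'
    using two(3)[OF that]
  proof
    assume "y \<in> Lw \<and> y' \<in> Up"
    then obtain P Q where P: "P \<in> linear_parts G" "y \<in> P" "P \<subseteq> lower_lines G"
      and Q: "Q \<in> linear_parts G" "y' \<in> Q" "Q \<subseteq> upper_lines G" unfolding Lw_def Up_def by blast
    then show ?thesis using linear_parts_distinct[OF False P(1,3) Q(3)] by blast
  next
    assume "y \<in> Up \<and> y' \<in> Lw"
    then obtain P Q where P: "P \<in> linear_parts G" "y \<in> P" "P \<subseteq> upper_lines G"
      and Q: "Q \<in> linear_parts G" "y' \<in> Q" "Q \<subseteq> lower_lines G" unfolding Lw_def Up_def by blast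
    then show ?thesis using linear_parts_distinct[OF False Q(1,3) P(3)] by blast
  qed
  moreover have "\<exists>P\<in>linear_parts G. y \<in> P" if "y \<in> S" for y
    using that SLU unfolding Lw_def Up_def by blast
  ultimately show ?thesis using two(1,2) by blast
qed

end

theorem theorem9:
  fixes G :: "(real \<times> real) set"
  assumes "maximal_monotone G"
  shows "dom_grad G - udom_Arg G \<subseteq> rel_frontier (dom_phi G) \<inter> G
    \<and> rel_frontier (dom_phi G) \<inter> G = rel_frontier (dom_phi G) \<inter> E_set G
    \<and> finite (udom_Arg G - dom_grad G) \<and> card (udom_Arg G - dom_grad G) \<le> 2
    \<and> (\<forall>y \<in> udom_Arg G - dom_grad G. \<exists>P \<in> linear_parts G. y \<in> P)
    \<and> (\<forall>y \<in> udom_Arg G - dom_grad G. \<forall>y' \<in> udom_Arg G - dom_grad G. y \<noteq> y' \<longrightarrow>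
         (\<exists>P \<in> linear_parts G. \<exists>Q \<in> linear_parts G. P \<noteq> Q \<and> y \<in> P \<and> y' \<in> Q))
    \<and> (\<forall>y \<in> dom_grad G \<inter> udom_Arg G.
         Arg G y = {Dc G y}
         \<and> phi G y = ereal (cst (Dc G y) y)
         \<and> phi G y = ereal (fst (grad G y) * snd (grad G y)))"
proof -
  interpret max_monotone G using assms by unfold_locales
  show ?thesis
    using dom_grad_diff_udom_Arg rel_frontier_inter_E_set udom_Arg_diff_dom_grad Dc_Arg_phi by blast
qed

end
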